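(* Let $\mathcal{A}=(Q,\delta,I,F)$ be a complete Büchi automaton with $n=|Q|$ and let $\mathcal{B}_S$ be the automaton produced from $\mathcal{A}$ by Schewe's rank-based complementation construction (described in the context). For $x\in\{\mathit{di},\mathit{de},\mathit{di+de}\}$, let $\mathcal{B}_S^{\mathit{sat},x}$ be the saturated variant $\mathcal{B}_S^{\mathit{sat}}$ (described in the context) in which every occurrence of $Q_2$ is replaced by $Q_2^{x}$, where $Q_2^{\mathit{di}}=Q_2\setminus\{(S,O,f,i)\in Q_2\mid\exists p,q\in S: p\preceq_{\mathit{di}}q\wedge f(p)>f(q)\}$, $Q_2^{\mathit{de}}=Q_2\setminus\{(S,O,f,i)\in Q_2\mid\exists p,q\in S: p\preceq_{\mathit{de}}q\wedge f(p)>\lceil f(q)\rceil\}$, $Q_2^{\mathit{di+de}}=Q_2^{\mathit{di}}\cap Q_2^{\mathit{de}}$, and $\lceil x\rceil$ is the smallest even number $\ge x$. Then $\mathcal{L}(\mathcal{B}_S^{\mathit{sat},\mathit{di}})=\mathcal{L}(\mathcal{B}_S^{\mathit{sat},\mathit{de}})=\mathcal{L}(\mathcal{B}_S^{\mathit{sat},\mathit{di+de}})=\mathcal{L}(\mathcal{B}_S)$.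
   Context: Fix a finite nonempty alphabet $\Sigma$. A Büchi automaton is $\mathcal{A}=(Q,\delta,I,F)$ with $\delta:Q\times\Sigma\to2^Q$, complete if $\delta(q,a)\ne\emptyset$ always; $\delta(P,a)=\bigcup_{p\in P}\delta(p,a)$. A run from $q$ on $\alpha=\alpha_0\alpha_1\cdots$ is $\rho$ with $\rho_0=q$, $\rho_{i+1}\in\delta(\rho_i,\alpha_i)$; accepting if some state of $F$ occurs infinitely often; $\mathcal{L}(\mathcal{A})$ is the set of words with an accepting run from an initial state. Simulations: in the game from $(p_0,r_0)$, in round $i$ Spoiler picks $p_i\xrightarrow{\alpha_i}p_{i+1}$ and Duplicator answers $r_i\xrightarrow{\alpha_i}r_{i+1}$; a Duplicator strategy is a map $\sigma$ with $\sigma(r,p\xrightarrow{a}p')\in\delta(r,a)$ (no lookahead). Duplicator wins the direct game if for all $i$, $p_i\in F\Rightarrow r_i\in F$, and the delayed game if for all $i$, $p_i\in F\Rightarrow\exists k\ge i: r_k\in F$. $p\preceq_{\mathit{di}}r$ (resp. $p\preceq_{\mathit{de}}r$) iff Duplicator has a winning strategy in the direct (resp. delayed) game from $(p,r)$. Schewe's construction. A ranking is $f:Q\to\{0,\dots,2n\}$ with $f(q)$ even for $q\in F$; $\mathrm{rank}(f)=\max_q f(q)$. $f$ is $S$-tight if $\mathrm{rank}(f)=r$ is odd, $\{f(s)\mid s\in S\}\supseteq\{1,3,\dots,r\}$ and $\{f(q)\mid q\notin S\}=\{0\}$; $\mathcal{T}$ is the set of $Q$-tight rankings. $\mathcal{B}_S=(Q',\delta',I',F')$: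 $Q'=Q_1\cup Q_2$, $Q_1=2^Q$, $Q_2=\{(S,O,f,i)\in 2^Q\times2^Q\times\mathcal{T}\times\{0,2,\dots,2n-2\}\mid f \text{ is } S\text{-tight},\ O\subseteq S\cap f^{-1}(i)\}$; $I'=\{I\}$; $\delta'=\delta_1\cup\delta_2\cup\delta_3$ with $\delta_1(S,a)=\{\delta(S,a)\}$; $\delta_2(S,a)=\{(S',\emptyset,f,0)\in Q_2\mid S'=\delta(S,a), f\text{ is } S'\text{-tight}\}$; $(S',O',f',i')\in\delta_3((S,O,f,i),a)$ iff $(S',O',f',i')\in Q_2$, $S'=\delta(S,a)$, $f'(q')\le f(q)$ for all $q\in S,q'\in\delta(q,a)$, $\mathrm{rank}(f)=\mathrm{rank}(f')$, $f'$ is $S'$-tight, and either ($O=\emptyset$, $i'=(i+2)\bmod(\mathrm{rank}(f')+1)$, $O'=f'^{-1}(i')$) or ($O\ne\emptyset$, $i'=i$, $O'=\delta(O,a)\cap f'^{-1}(i)$); $F'=\{\emptyset\}\cup\{(S,\emptyset,f,i)\in Q_2\}$. Saturated variant: with $\mathrm{str}(S)=\{q\in Q\mid\exists s\in S:q\preceq_{\mathit{de}}s\}$, $\mathcal{B}_S^{\mathit{sat}}$ has the same $Q'$, $I'$, $F'$ but transitions $\delta_1^{\mathit{sat}}(S,a)=\{\mathrm{str}(\delta(S,a))\}$; $\delta_2^{\mathit{sat}}(S,a)=\{(S',\emptyset,f,0)\in Q_2\mid S'=\mathrm{str}(\delta(S,a))\}$; $(S',O',f',i')\in\delta_3^{\mathit{sat}}((S,O,f,i),a)$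 iff $(S',O',f',i')\in Q_2$, $S'=\mathrm{str}(\delta(S,a))$, $f'(q')\le f(q)$ for all $q\in S,q'\in\delta(q,a)$, $\mathrm{rank}(f)=\mathrm{rank}(f')$, and either ($O=\emptyset$, $i'=(i+2)\bmod(\mathrm{rank}(f')+1)$, $O'=f'^{-1}(i')$) or ($O\ne\emptyset$, $i'=i$, $O'=\delta(O,a)\cap f'^{-1}(i)$). *)

theory Defs
  imports Main
begin

type_synonym ('s, 'a) trans = "'s \<Rightarrow> 'a \<Rightarrow> 's set"

definition complete :: "('s, 'a) trans \<Rightarrow> bool" where
  "complete \<delta> \<longleftrightarrow> (\<forall>q a. \<delta> q a \<noteq> {})"

definition dset :: "('s, 'a) trans \<Rightarrow> 's set \<Rightarrow> 'a \<Rightarrow> 's set" where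
  "dset \<delta> P a = (\<Union>p\<in>P. \<delta> p a)"

definition is_run :: "('s, 'a) trans \<Rightarrow> 's \<Rightarrow> (nat \<Rightarrow> 'a) \<Rightarrow> (nat \<Rightarrow> 's) \<Rightarrow> bool" where
  "is_run \<delta> q \<alpha> \<rho> \<longleftrightarrow> \<rho> 0 = q \<and> (\<forall>i. \<rho> (Suc i) \<in> \<delta> (\<rho> i) (\<alpha> i))"

definition accepting :: "'s set \<Rightarrow> (nat \<Rightarrow> 's) \<Rightarrow> bool" where
  "accepting F \<rho> \<longleftrightarrow> (\<exists>q\<in>F. \<exists>\<^sub>\<infinity> i. \<rho> i = q)"

definition lang :: "('s, 'a) trans \<Rightarrow> 's set \<Rightarrow> 's set \<Rightarrow> (nat \<Rightarrow> 'a) set" where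
  "lang \<delta> I F = {\<alpha>. \<exists>q\<in>I. \<exists>\<rho>. is_run \<delta> q \<alpha> \<rho> \<and> accepting F \<rho>}"

definition dup_strategy :: "('q, 'a) trans \<Rightarrow> ('q \<Rightarrow> 'q \<Rightarrow> 'a \<Rightarrow> 'q \<Rightarrow> 'q) \<Rightarrow> bool" where
  "dup_strategy \<delta> \<sigma> \<longleftrightarrow> (\<forall>r p a p'. p' \<in> \<delta> p a \<longrightarrow> \<sigma> r p a p' \<in> \<delta> r a)"

fun dup_play :: "('q \<Rightarrow> 'q \<Rightarrow> 'a \<Rightarrow> 'q \<Rightarrow> 'q) \<Rightarrow> 'q \<Rightarrow> (nat \<Rightarrow> 'q) \<Rightarrow> (nat \<Rightarrow> 'a) \<Rightarrow> nat \<Rightarrow> 'q" where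
  "dup_play \<sigma> r0 p \<alpha> 0 = r0"
| "dup_play \<sigma> r0 p \<alpha> (Suc i) = \<sigma> (dup_play \<sigma> r0 p \<alpha> i) (p i) (\<alpha> i) (p (Suc i))"

definition direct_sim :: "('q, 'a) trans \<Rightarrow> 'q set \<Rightarrow> 'q \<Rightarrow> 'q \<Rightarrow> bool" where
  "direct_sim \<delta> F p0 r0 \<longleftrightarrow> (\<exists>\<sigma>. dup_strategy \<delta> \<sigma> \<and>
     (\<forall>\<alpha> p. is_run \<delta> p0 \<alpha> p \<longrightarrow> (\<forall>i. p i \<in> F \<longrightarrow> dup_play \<sigma> r0 p \<alpha> i \<in> F)))"

definition delayed_sim :: "('q, 'a) trans \<Rightarrow> 'q set \<Rightarrow> 'q \<Rightarrow> 'q \<Rightarrow> bool" where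
  "delayed_sim \<delta> F p0 r0 \<longleftrightarrow> (\<exists>\<sigma>. dup_strategy \<delta> \<sigma> \<and>
     (\<forall>\<alpha> p. is_run \<delta> p0 \<alpha> p \<longrightarrow> (\<forall>i. p i \<in> F \<longrightarrow> (\<exists>k\<ge>i. dup_play \<sigma> r0 p \<alpha> k \<in> F))))"

section \<open>Schewe's construction; Q = UNIV of the finite type 'q, n = card (UNIV :: 'q set)\<close>

type_synonym 'q macro = "'q set \<times> 'q set \<times> ('q \<Rightarrow> nat) \<times> nat"
type_synonym 'q bstate = "'q set + 'q macro"

definition rank :: "('q::finite \<Rightarrow> nat) \<Rightarrow> nat" where
  "rank f = Max (range f)"

definition is_ranking :: "'q set \<Rightarrow> ('q::finite \<Rightarrow> nat) \<Rightarrow> bool" where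
  "is_ranking F f \<longleftrightarrow> (\<forall>q. f q \<le> 2 * card (UNIV :: 'q set)) \<and> (\<forall>q\<in>F. even (f q))"

definition tight :: "'q set \<Rightarrow> 'q set \<Rightarrow> ('q::finite \<Rightarrow> nat) \<Rightarrow> bool" where
  "tight F S f \<longleftrightarrow> is_ranking F f \<and> odd (rank f)
     \<and> {r. odd r \<and> r \<le> rank f} \<subseteq> f ` S \<and> (\<forall>q. q \<notin> S \<longrightarrow> f q = 0)"

definition Q2 :: "'q set \<Rightarrow> ('q::finite) macro set" where
  "Q2 F = {(S, Ob, f, i). tight F UNIV f \<and> tight F S f \<and> even i \<and> i \<le> 2 * card (UNIV :: 'q set) - 2
             \<and> Ob \<subseteq> S \<inter> f -` {i}}"

definition step3_ok :: "('q::finite, 'a) trans \<Rightarrow> 'q macro \<Rightarrow> 'a \<Rightarrow> 'q macro \<Rightarrow> bool" where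
  "step3_ok \<delta> s a s' \<longleftrightarrow> (case s of (S, Ob, f, i) \<Rightarrow> case s' of (S', Ob', f', i') \<Rightarrow>
      (\<forall>q\<in>S. \<forall>q'\<in>\<delta> q a. f' q' \<le> f q) \<and> rank f = rank f'
      \<and> ((Ob = {} \<and> i' = (i + 2) mod (rank f' + 1) \<and> Ob' = S' \<inter> f' -` {i'})
         \<or> (Ob \<noteq> {} \<and> i' = i \<and> Ob' = dset \<delta> Ob a \<inter> f' -` {i})))"

definition schewe_delta :: "('q::finite, 'a) trans \<Rightarrow> 'q set \<Rightarrow> ('q bstate, 'a) trans" where
  "schewe_delta \<delta> F s a = (case s of
     Inl S \<Rightarrow> {Inl (dset \<delta> S a)}
              \<union> {Inr (S', {}, f, 0) | S' f. (S', {}, f, 0) \<in> Q2 F \<and> S' = dset \<delta> S a \<and> tight F S' f}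
   | Inr m \<Rightarrow> (if m \<in> Q2 F then
       {Inr m' | m'. m' \<in> Q2 F \<and> fst m' = dset \<delta> (fst m) a \<and> tight F (fst m') (fst (snd (snd m')))
                      \<and> step3_ok \<delta> m a m'}
       else {}))"

definition schewe_final :: "'q set \<Rightarrow> ('q::finite) bstate set" where
  "schewe_final F = {Inl {}} \<union> {Inr (S, {}, f, i) | S f i. (S, {}, f, i) \<in> Q2 F}"

section \<open>Saturated variant, parametrised by the replacement X of Q2\<close>

definition str :: "('q, 'a) trans \<Rightarrow> 'q set \<Rightarrow> 'q set \<Rightarrow> 'q set" where
  "str \<delta> F S = {q. \<exists>s\<in>S. delayed_sim \<delta> F q s}"

definition sat_delta :: "('q::finite, 'a) trans \<Rightarrow> 'q set \<Rightarrow> 'q macro set \<Rightarrow> ('q bstate, 'a) trans" where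
  "sat_delta \<delta> F X s a = (case s of
     Inl S \<Rightarrow> {Inl (str \<delta> F (dset \<delta> S a))}
              \<union> {Inr (S', {}, f, 0) | S' f. (S', {}, f, 0) \<in> X \<and> S' = str \<delta> F (dset \<delta> S a)}
   | Inr m \<Rightarrow> (if m \<in> X then
       {Inr m' | m'. m' \<in> X \<and> fst m' = str \<delta> F (dset \<delta> (fst m) a) \<and> step3_ok \<delta> m a m'}
       else {}))"

definition sat_final :: "('q::finite) macro set \<Rightarrow> 'q bstate set" where
  "sat_final X = {Inl {}} \<union> {Inr (S, {}, f, i) | S f i. (S, {}, f, i) \<in> X}"

definition ceil_even :: "nat \<Rightarrow> nat" where
  "ceil_even x = (if even x then x else x + 1)"

definition Q2_di :: "('q::finite, 'a) trans \<Rightarrow> 'q set \<Rightarrow> 'q macro set" where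
  "Q2_di \<delta> F = Q2 F - {(S, Ob, f, i) | S Ob f i. (S, Ob, f, i) \<in> Q2 F \<and>
       (\<exists>p\<in>S. \<exists>q\<in>S. direct_sim \<delta> F p q \<and> f p > f q)}"

definition Q2_de :: "('q::finite, 'a) trans \<Rightarrow> 'q set \<Rightarrow> 'q macro set" where
  "Q2_de \<delta> F = Q2 F - {(S, Ob, f, i) | S Ob f i. (S, Ob, f, i) \<in> Q2 F \<and>
       (\<exists>p\<in>S. \<exists>q\<in>S. delayed_sim \<delta> F p q \<and> f p > ceil_even (f q))}"

definition Q2_dide :: "('q::finite, 'a) trans \<Rightarrow> 'q set \<Rightarrow> 'q macro set" where
  "Q2_dide \<delta> F = Q2_di \<delta> F \<inter> Q2_de \<delta> F"

end

theory Submission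
  imports Defs "HOL-Library.Infinite_Set"
begin

text \<open>All four automata are instances of one construction \<open>gen_delta \<delta> g X\<close>: the subset
  component is post-processed by \<open>g\<close> (the identity for Schewe's automaton, \<open>str \<delta> F\<close> for the
  saturated ones) and the rank-based part is restricted to a set \<open>X \<subseteq> Q2 F\<close>. Every instance
  recognises the complement of \<open>L(A)\<close> provided \<open>g\<close> only adds states delayed-simulated by
  existing ones and \<open>X\<close> contains all macrostates whose ranking is monotone under delayed
  simulation; \<open>Q2\<^sub>d\<^sub>i\<close>, \<open>Q2\<^sub>d\<^sub>e\<close> and their intersection all do.

  Soundness: along an accepting run of \<open>A\<close> the ranks never increase, so they settle on an even
  value \<open>c\<close>; the breakpoint index cycles through the even ranks and, once it hits \<open>c\<close> at a
  reset, the run stays in the breakpoint set forever, so resets are finite.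

  Completeness: for a rejected word, take the run DAG over the saturated levels and the ranks
  given by the Kupferman--Vardi pruning. They are bounded by \<open>2n\<close>, do not increase along
  edges, are even on \<open>F\<close>, and are monotone under delayed simulation, because replaying
  Duplicator's strategy stays inside every pruning stage that Spoiler's run stays in. Hence the
  maximal rank eventually becomes constant, odd and tight, and the breakpoint construction over
  these rankings resets infinitely often, since an infinite breakpoint chain of even rank would
  survive one more pruning stage.\<close>

lemma antimono_nat_eventually_const:
  fixes f :: "nat \<Rightarrow> nat"
  assumes "\<And>k. f (Suc k) \<le> f k"
  shows "\<exists>l. \<forall>k\<ge>l. f k = f l"
proof -
  have anti: "antimono f" using assms by (simp add: antimono_iff_le_Suc)
  obtain l where l: "f l = (LEAST v. v \<in> range f)" by (metis LeastI rangeE rangeI)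
  have "f k = f l" if "l \<le> k" for k
    using antimonoD[OF anti that] l Least_le[of "\<lambda>v. v \<in> range f" "f k"] by simp
  then show ?thesis by blast
qed

lemma MOST_antimono_nat_const:
  fixes f :: "nat \<Rightarrow> nat"
  assumes "\<forall>\<^sub>\<infinity>k. f (Suc k) \<le> f k"
  shows "\<forall>\<^sub>\<infinity>k. f (Suc k) = f k"
proof -
  obtain a where a: "\<And>k. a \<le> k \<Longrightarrow> f (Suc k) \<le> f k" using assms by (auto simp: MOST_nat_le)
  have "\<And>k. f (a + Suc k) \<le> f (a + k)" using a by simp
  then obtain l where l: "\<forall>k\<ge>l. f (a + k) = f (a + l)"
    using antimono_nat_eventually_const[of "\<lambda>k. f (a + k)"] by auto
  have "f (Suc k) = f k" if "a + l \<le> k" for k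
    using that l[rule_format, of "k - a"] l[rule_format, of "Suc k - a"] by simp
  then show ?thesis by (auto simp: MOST_nat_le)
qed

lemma not_MOST_nat_decreasing:
  fixes f :: "nat \<Rightarrow> nat"
  shows "\<not> (\<forall>\<^sub>\<infinity>k. f (Suc k) < f k)"
proof
  assume dec: "\<forall>\<^sub>\<infinity>k. f (Suc k) < f k"
  then have "\<forall>\<^sub>\<infinity>k. f (Suc k) = f k" by (intro MOST_antimono_nat_const) (auto elim: MOST_mono)
  with dec have "\<forall>\<^sub>\<infinity>k::nat. False" by (rule MOST_rev_mp[OF MOST_conjI]) auto
  then show False by simp
qed

lemma INFM_nat_shift: "(\<exists>\<^sub>\<infinity>k. P (k + m)) \<longleftrightarrow> (\<exists>\<^sub>\<infinity>k::nat. P k)"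
  using eventually_sequentially_seg[of "\<lambda>k. \<not> P k" m] by (simp add: frequently_def cofinite_eq_sequentially)

lemma ex_in_finite_forall_downclosed:
  assumes "finite A" and "\<And>K. \<exists>v\<in>A. P v K"
    and "\<And>v K K'. P v K \<Longrightarrow> K' \<le> K \<Longrightarrow> P v K'"
  shows "\<exists>v\<in>A. \<forall>K::nat. P v K"
proof -
  have "\<exists>\<^sub>\<infinity>K. \<exists>v\<in>A. P v K" using assms(2) by (simp add: INFM_nat_le)
  then obtain v where "v \<in> A" "\<exists>\<^sub>\<infinity>K. P v K" using INFM_finite_Bex_distrib[OF assms(1)] by blast
  then show ?thesis using assms(3) by (meson INFM_nat_le)
qed

lemma accepting_if_finite_range:
  assumes "finite (range \<rho>)" and "\<exists>\<^sub>\<infinity>j. \<rho> j \<in> F"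
  shows "accepting F \<rho>"
proof -
  have "\<exists>\<^sub>\<infinity>j. \<exists>q\<in>F \<inter> range \<rho>. \<rho> j = q" using assms(2) by (rule INFM_mono) auto
  then obtain q where "q \<in> F" "\<exists>\<^sub>\<infinity>j. \<rho> j = q"
    using INFM_finite_Bex_distrib[of "F \<inter> range \<rho>" "\<lambda>q j. \<rho> j = q"] assms(1) by auto
  then show ?thesis by (auto simp: accepting_def)
qed

lemma finite_bounded_funs: "finite {f :: 'q::finite \<Rightarrow> nat. \<forall>q. f q \<le> M}"
proof -
  have "{f :: 'q \<Rightarrow> nat. \<forall>q. f q \<le> M} = {f. \<forall>x. (x \<in> UNIV \<longrightarrow> f x \<in> {..M}) \<and> (x \<notin> UNIV \<longrightarrow> f x = 0)}"
    by auto
  then show ?thesis using finite_set_of_finite_funs[of "UNIV :: 'q set" "{..M}" 0] by simp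
qed

lemma is_run_Suc: "is_run \<delta> q \<alpha> \<rho> \<Longrightarrow> \<rho> (Suc i) \<in> \<delta> (\<rho> i) (\<alpha> i)"
  by (simp add: is_run_def)

lemma delayed_sim_refl:
  assumes "complete \<delta>"
  shows "delayed_sim \<delta> F p p"
proof -
  define \<sigma> where "\<sigma> = (\<lambda>r (p::'a) a p'. if p' \<in> \<delta> r a then p' else (SOME x. x \<in> \<delta> r a))"
  have "dup_strategy \<delta> \<sigma>"
    unfolding dup_strategy_def \<sigma>_def using assms by (auto simp: complete_def some_in_eq)
  moreover have "dup_play \<sigma> p \<rho> \<alpha> i = \<rho> i" if "is_run \<delta> p \<alpha> \<rho>" for \<alpha> \<rho> i
    using that by (induction i) (auto simp: is_run_def \<sigma>_def)
  ultimately show ?thesis unfolding delayed_sim_def by (metis order_refl)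
qed

lemma direct_sim_imp_delayed_sim: "direct_sim \<delta> F p q \<Longrightarrow> delayed_sim \<delta> F p q"
  unfolding direct_sim_def delayed_sim_def by (metis order_refl)

definition glue :: "nat \<Rightarrow> (nat \<Rightarrow> 'q) \<Rightarrow> (nat \<Rightarrow> 'q) \<Rightarrow> nat \<Rightarrow> 'q" where
  "glue t \<rho> \<pi> x = (if x \<le> t then \<rho> x else \<pi> (x - t))"

lemma glue_le: "x \<le> t \<Longrightarrow> glue t \<rho> \<pi> x = \<rho> x"
  by (simp add: glue_def)

lemma glue_add: "\<pi> 0 = \<rho> t \<Longrightarrow> glue t \<rho> \<pi> (t + y) = \<pi> y"
  by (simp add: glue_def)

section \<open>Run DAGs and their pruning\<close>

locale run_dag =
  fixes \<delta> :: "('q::finite, 'a) trans" and F :: "'q set" and \<alpha> :: "nat \<Rightarrow> 'a" and S :: "nat \<Rightarrow> 'q set"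
  assumes total: "complete \<delta>"
    and S_closed: "\<And>k q q'. q \<in> S k \<Longrightarrow> q' \<in> \<delta> q (\<alpha> k) \<Longrightarrow> q' \<in> S (Suc k)"
begin

text \<open>Nodes of the run DAG are pairs \<open>(q, k)\<close> with \<open>q \<in> S k\<close>; a state sequence \<open>\<pi>\<close> read
  from level \<open>k\<close> visits the node \<open>(\<pi> j, k + j)\<close> at step \<open>j\<close>.\<close>

definition steps_upto :: "nat \<Rightarrow> (nat \<Rightarrow> 'q) \<Rightarrow> nat \<Rightarrow> bool" where
  "steps_upto k \<pi> m \<longleftrightarrow> (\<forall>j<m. \<pi> (Suc j) \<in> \<delta> (\<pi> j) (\<alpha> (k + j)))"

definition steps :: "nat \<Rightarrow> (nat \<Rightarrow> 'q) \<Rightarrow> bool" where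
  "steps k \<pi> \<longleftrightarrow> (\<forall>j. \<pi> (Suc j) \<in> \<delta> (\<pi> j) (\<alpha> (k + j)))"

definition path :: "('q \<times> nat) set \<Rightarrow> 'q \<Rightarrow> nat \<Rightarrow> (nat \<Rightarrow> 'q) \<Rightarrow> nat \<Rightarrow> bool" where
  "path G q k \<pi> m \<longleftrightarrow> \<pi> 0 = q \<and> steps_upto k \<pi> m \<and> (\<forall>j\<le>m. (\<pi> j, k + j) \<in> G)"

definition ipath :: "('q \<times> nat) set \<Rightarrow> 'q \<Rightarrow> nat \<Rightarrow> (nat \<Rightarrow> 'q) \<Rightarrow> bool" where
  "ipath G q k \<pi> \<longleftrightarrow> \<pi> 0 = q \<and> steps k \<pi> \<and> (\<forall>j. (\<pi> j, k + j) \<in> G)"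

definition reaches_F :: "('q \<times> nat) set \<Rightarrow> 'q \<Rightarrow> nat \<Rightarrow> bool" where
  "reaches_F G q k \<longleftrightarrow> (\<exists>\<pi> m. path G q k \<pi> m \<and> \<pi> m \<in> F)"

definition has_ipath :: "('q \<times> nat) set \<Rightarrow> 'q \<Rightarrow> nat \<Rightarrow> bool" where
  "has_ipath G q k \<longleftrightarrow> (\<exists>\<pi>. ipath G q k \<pi>)"

text \<open>The pruning sequence of Kupferman and Vardi: odd stages drop the nodes with only finitely
  many descendants, even stages drop the nodes from which no \<open>F\<close>-node is reachable.\<close>

fun prune :: "nat \<Rightarrow> ('q \<times> nat) set" where
  "prune 0 = {(q, k). q \<in> S k}"
| "prune (Suc j) = (if even j then {(q, k). (q, k) \<in> prune j \<and> has_ipath (prune j) q k}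
                    else {(q, k). (q, k) \<in> prune j \<and> reaches_F (prune j) q k})"

lemma prune_Suc_even: "even j \<Longrightarrow> (q, k) \<in> prune (Suc j) \<longleftrightarrow> (q, k) \<in> prune j \<and> has_ipath (prune j) q k"
  by simp

lemma prune_Suc_odd: "odd j \<Longrightarrow> (q, k) \<in> prune (Suc j) \<longleftrightarrow> (q, k) \<in> prune j \<and> reaches_F (prune j) q k"
  by simp

lemma prune_Suc_subset: "prune (Suc j) \<subseteq> prune j"
  by auto

declare prune.simps(2)[simp del]

lemma prune_antimono: "j \<le> j' \<Longrightarrow> prune j' \<subseteq> prune j"
  by (induction j' rule: dec_induct) (use prune_Suc_subset in auto)

lemma prune_in_S: "(q, k) \<in> prune j \<Longrightarrow> q \<in> S k"
  using prune_antimono[of 0 j] by auto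

lemma steps_imp_steps_upto: "steps k \<pi> \<Longrightarrow> steps_upto k \<pi> m"
  by (simp add: steps_upto_def steps_def)

lemma steps_shift: "steps k \<pi> \<Longrightarrow> steps (k + t) (\<lambda>y. \<pi> (t + y))"
  by (simp add: steps_def add.assoc)

lemma steps_is_run: "steps k \<rho> \<Longrightarrow> is_run \<delta> (\<rho> 0) (\<lambda>x. \<alpha> (k + x)) \<rho>"
  by (simp add: steps_def is_run_def)

lemma steps_in_S: "steps k \<rho> \<Longrightarrow> \<rho> 0 \<in> S k \<Longrightarrow> \<rho> j \<in> S (k + j)"
  by (induction j) (auto simp: steps_def intro: S_closed)

lemma steps_upto_glue:
  assumes "steps_upto k \<rho> t" "\<pi> 0 = \<rho> t" "steps_upto (k + t) \<pi> m"
  shows "steps_upto k (glue t \<rho> \<pi>) (t + m)"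
  unfolding steps_upto_def
proof (intro allI impI)
  fix j assume j: "j < t + m"
  show "glue t \<rho> \<pi> (Suc j) \<in> \<delta> (glue t \<rho> \<pi> j) (\<alpha> (k + j))"
  proof (cases "j < t")
    case True
    then show ?thesis using assms(1) by (simp add: glue_def steps_upto_def)
  next
    case False
    then obtain y where y: "j = t + y" by (metis le_add_diff_inverse not_less)
    with j assms(3) have "\<pi> (Suc y) \<in> \<delta> (\<pi> y) (\<alpha> (k + t + y))" by (simp add: steps_upto_def)
    then show ?thesis using y glue_add[of \<pi> \<rho> t] assms(2) by (simp flip: add_Suc_right add: add.assoc)
  qed
qed

lemma steps_glue:
  assumes "steps_upto k \<rho> t" "\<pi> 0 = \<rho> t" "steps (k + t) \<pi>"
  shows "steps k (glue t \<rho> \<pi>)"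
  unfolding steps_def
proof
  fix j
  have "steps_upto k (glue t \<rho> \<pi>) (t + Suc j)"
    using steps_upto_glue[OF assms(1,2) steps_imp_steps_upto[OF assms(3)]] .
  from this[unfolded steps_upto_def, rule_format, of j]
  show "glue t \<rho> \<pi> (Suc j) \<in> \<delta> (glue t \<rho> \<pi> j) (\<alpha> (k + j))" by simp
qed

lemma path_start: "path G q k \<pi> m \<Longrightarrow> (q, k) \<in> G"
  unfolding path_def by (metis add_0_right le0)

lemma ipath_start: "ipath G q k \<pi> \<Longrightarrow> (q, k) \<in> G"
  unfolding ipath_def by (metis add_0_right)

lemma ipath_shift: "ipath G q k \<pi> \<Longrightarrow> ipath G (\<pi> t) (k + t) (\<lambda>y. \<pi> (t + y))"
  by (auto simp: ipath_def steps_shift add.assoc)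

lemma ipath_imp_path: "ipath G q k \<pi> \<Longrightarrow> path G q k \<pi> m"
  by (auto simp: ipath_def path_def steps_imp_steps_upto)

lemma path_prefix: "path G q k \<pi> m \<Longrightarrow> m' \<le> m \<Longrightarrow> path G q k \<pi> m'"
  by (auto simp: path_def steps_upto_def)

lemma path_subset: "path G q k \<pi> m \<Longrightarrow> G \<subseteq> G' \<Longrightarrow> path G' q k \<pi> m"
  by (auto simp: path_def)

lemma path_Cons:
  assumes "(q, k) \<in> G" "\<pi> 0 \<in> \<delta> q (\<alpha> k)" "path G q' (Suc k) \<pi> m"
  shows "path G q k (case_nat q \<pi>) (Suc m)"
  using assms by (auto simp: path_def steps_upto_def split: nat.split)

lemma path_tl:
  assumes "path G q k \<pi> (Suc m)"
  shows "path G (\<pi> 1) (Suc k) (\<lambda>y. \<pi> (Suc y)) m \<and> \<pi> 1 \<in> \<delta> q (\<alpha> k)"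
  using assms by (auto simp: path_def steps_upto_def)

lemma path_glue:
  assumes "path G q k \<pi> m" "path G (\<pi> m) (k + m) \<pi>' m'"
  shows "path G q k (glue m \<pi> \<pi>') (m + m') \<and> glue m \<pi> \<pi>' (m + m') = \<pi>' m'"
proof -
  have "(glue m \<pi> \<pi>' j, k + j) \<in> G" if "j \<le> m + m'" for j
  proof (cases "j \<le> m")
    case True then show ?thesis using assms(1) by (simp add: glue_def path_def)
  next
    case False
    then obtain z where "j = m + z" "z \<le> m'" using \<open>j \<le> m + m'\<close> by (metis add_le_cancel_left le_add_diff_inverse nat_le_linear)
    then show ?thesis using assms(2) glue_add[of \<pi>' \<pi> m z] by (simp add: path_def add.assoc)
  qed
  then show ?thesis
    using steps_upto_glue[of k \<pi> m \<pi>' m'] glue_add[of \<pi>' \<pi> m m'] assms by (auto simp: path_def glue_def)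
qed

lemma ipath_glue:
  assumes "path G q k \<pi> m" "ipath G (\<pi> m) (k + m) \<pi>'"
  shows "ipath G q k (glue m \<pi> \<pi>')"
proof -
  have p: "path G q k (glue m \<pi> \<pi>') (m + m')" for m'
    using path_glue[OF assms(1) ipath_imp_path[OF assms(2)]] by blast
  have "glue m \<pi> \<pi>' (Suc j) \<in> \<delta> (glue m \<pi> \<pi>' j) (\<alpha> (k + j))" "(glue m \<pi> \<pi>' j, k + j) \<in> G" for j
    using p[of "Suc j"] by (auto simp: path_def steps_upto_def)
  then show ?thesis using p[of 0] by (auto simp: ipath_def steps_def path_def)
qed

lemma ex_steps_invariant:
  assumes "P q k" and step: "\<And>q k. P q k \<Longrightarrow> \<exists>q'\<in>\<delta> q (\<alpha> k). P q' (Suc k) \<and> R q k q'"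
  shows "\<exists>\<rho>. \<rho> 0 = q \<and> steps k \<rho> \<and> (\<forall>j. P (\<rho> j) (k + j) \<and> R (\<rho> j) (k + j) (\<rho> (Suc j)))"
proof -
  define \<rho> where "\<rho> = rec_nat q (\<lambda>j p. SOME q'. q' \<in> \<delta> p (\<alpha> (k + j)) \<and> P q' (Suc (k + j)) \<and> R p (k + j) q')"
  have \<rho>_Suc: "\<rho> (Suc j) = (SOME q'. q' \<in> \<delta> (\<rho> j) (\<alpha> (k + j)) \<and> P q' (Suc (k + j)) \<and> R (\<rho> j) (k + j) q')" for j
    by (simp add: \<rho>_def)
  have inv: "P (\<rho> j) (k + j)" for j
  proof (induction j)
    case 0 then show ?case using assms(1) by (simp add: \<rho>_def)
  next
    case (Suc j) then show ?case using someI_ex[OF step[OF Suc[simplified], unfolded Bex_def]] \<rho>_Suc[of j] by (simp add: Bex_def)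
  qed
  have "\<rho> (Suc j) \<in> \<delta> (\<rho> j) (\<alpha> (k + j)) \<and> R (\<rho> j) (k + j) (\<rho> (Suc j))" for j
    using someI_ex[OF step[OF inv[of j], unfolded Bex_def]] \<rho>_Suc[of j] by (simp add: Bex_def)
  moreover have "\<rho> 0 = q" by (simp add: \<rho>_def)
  ultimately show ?thesis using inv by (auto simp: steps_def)
qed

lemma ex_ipath_prune_0:
  assumes "q \<in> S k"
  shows "\<exists>\<rho>. ipath (prune 0) q k \<rho>"
proof -
  have "\<exists>q'\<in>\<delta> p (\<alpha> l). q' \<in> S (Suc l) \<and> True" if "p \<in> S l" for p l
    using total S_closed that unfolding complete_def by blast
  then show ?thesis
    using ex_steps_invariant[of "\<lambda>q k. q \<in> S k" q k "\<lambda>_ _ _. True"] assms by (auto simp: ipath_def)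
qed

end

context run_dag
begin

lemma ipath_Cons:
  assumes "(q, k) \<in> G" "\<pi> 0 \<in> \<delta> q (\<alpha> k)" "ipath G q' (Suc k) \<pi>"
  shows "ipath G q k (case_nat q \<pi>)"
  using assms by (auto simp: ipath_def steps_def split: nat.split)

lemma path_prune_0_extend:
  assumes "path (prune 0) q k \<pi> m"
  shows "\<exists>\<rho>. ipath (prune 0) q k \<rho> \<and> (\<forall>j\<le>m. \<rho> j = \<pi> j)"
proof -
  have "\<pi> m \<in> S (k + m)" using assms by (auto simp: path_def)
  then obtain \<pi>' where "ipath (prune 0) (\<pi> m) (k + m) \<pi>'" using ex_ipath_prune_0 by blast
  then have "ipath (prune 0) q k (glue m \<pi> \<pi>')" using ipath_glue assms by blast
  then show ?thesis using glue_le[of _ m \<pi> \<pi>'] by blast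
qed

lemma ipath_prune_odd:
  assumes "ipath (prune (2 * i)) q k \<pi>"
  shows "ipath (prune (Suc (2 * i))) q k \<pi>"
proof -
  have "has_ipath (prune (2 * i)) (\<pi> t) (k + t)" for t
    using ipath_shift[OF assms] unfolding has_ipath_def by blast
  then show ?thesis using assms by (simp add: ipath_def prune_Suc_even)
qed

lemma reaches_F_ipath:
  assumes "(q, k) \<in> prune (Suc (2 * i))" "reaches_F (prune (Suc (2 * i))) q k"
  shows "\<exists>\<pi> m. ipath (prune (Suc (2 * i))) q k \<pi> \<and> \<pi> m \<in> F"
proof -
  obtain \<pi> m where \<pi>: "path (prune (Suc (2 * i))) q k \<pi> m" "\<pi> m \<in> F"
    using assms(2) unfolding reaches_F_def by blast
  then have "(\<pi> m, k + m) \<in> prune (Suc (2 * i))" by (simp add: path_def)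
  then obtain \<pi>' where "ipath (prune (2 * i)) (\<pi> m) (k + m) \<pi>'"
    by (auto simp: prune_Suc_even has_ipath_def)
  then have "ipath (prune (Suc (2 * i))) q k (glue m \<pi> \<pi>')"
    using ipath_glue[OF \<pi>(1)] ipath_prune_odd by blast
  then show ?thesis using \<pi>(2) glue_le[of m m \<pi> \<pi>'] by (intro exI[of _ "glue m \<pi> \<pi>'"] exI[of _ m]) simp
qed

lemma prune_odd_succ:
  assumes "(q, k) \<in> prune (Suc (2 * i))"
  shows "\<exists>q'\<in>\<delta> q (\<alpha> k). (q', Suc k) \<in> prune (Suc (2 * i))"
proof -
  obtain \<pi> where "ipath (prune (2 * i)) q k \<pi>" using assms by (auto simp: prune_Suc_even has_ipath_def)
  then have "path (prune (Suc (2 * i))) q k \<pi> 1" by (intro ipath_imp_path ipath_prune_odd)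
  then have "path (prune (Suc (2 * i))) (\<pi> 1) (Suc k) (\<lambda>y. \<pi> (Suc y)) 0" "\<pi> 1 \<in> \<delta> q (\<alpha> k)"
    using path_tl[of _ q k \<pi> 0] by auto
  then show ?thesis using path_start by blast
qed

definition F_dist :: "('q \<times> nat) set \<Rightarrow> 'q \<Rightarrow> nat \<Rightarrow> nat" where
  "F_dist G q k = (LEAST m. \<exists>\<pi>. path G q k \<pi> m \<and> \<pi> m \<in> F)"

lemma F_dist_Suc_less:
  assumes "reaches_F G q k" "q \<notin> F"
  shows "\<exists>q'\<in>\<delta> q (\<alpha> k). (q', Suc k) \<in> G \<and> F_dist G q' (Suc k) < F_dist G q k"
proof -
  have "\<exists>m \<pi>. path G q k \<pi> m \<and> \<pi> m \<in> F" using assms(1) unfolding reaches_F_def by blast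
  then have "\<exists>\<pi>. path G q k \<pi> (F_dist G q k) \<and> \<pi> (F_dist G q k) \<in> F"
    unfolding F_dist_def by (rule LeastI_ex)
  then obtain \<pi> where \<pi>: "path G q k \<pi> (F_dist G q k)" "\<pi> (F_dist G q k) \<in> F" by blast
  then obtain m where m: "F_dist G q k = Suc m" using assms(2) by (cases "F_dist G q k") (simp_all add: path_def)
  then have "path G (\<pi> 1) (Suc k) (\<lambda>y. \<pi> (Suc y)) m" "\<pi> 1 \<in> \<delta> q (\<alpha> k)"
    using path_tl[of G q k \<pi> m] \<pi>(1) by auto
  moreover have "\<pi> (Suc m) \<in> F" using \<pi>(2) m by simp
  moreover from calculation(1) this have "F_dist G (\<pi> 1) (Suc k) \<le> m"
    unfolding F_dist_def by (intro Least_le exI[of _ "\<lambda>y. \<pi> (Suc y)"]) simp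
  moreover from calculation(1) have "(\<pi> 1, Suc k) \<in> G" by (rule path_start)
  ultimately show ?thesis using m by auto
qed

lemma prune_pred:
  assumes "q \<in> S k" "q' \<in> \<delta> q (\<alpha> k)" "(q', Suc k) \<in> prune j"
  shows "(q, k) \<in> prune j"
  using assms(3)
proof (induction j)
  case 0
  then show ?case using assms(1) by simp
next
  case (Suc j)
  then have IH: "(q, k) \<in> prune j" using prune_Suc_subset by blast
  show ?case
  proof (cases "even j")
    case True
    with Suc.prems obtain \<pi> where "ipath (prune j) q' (Suc k) \<pi>"
      by (auto simp: has_ipath_def prune_Suc_even)
    then have "ipath (prune j) q k (case_nat q \<pi>)"
      using ipath_Cons IH assms(2) by (simp add: ipath_def)
    then show ?thesis using IH True by (auto simp: has_ipath_def prune_Suc_even)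
  next
    case False
    with Suc.prems obtain \<pi> m where "path (prune j) q' (Suc k) \<pi> m" "\<pi> m \<in> F"
      by (auto simp: reaches_F_def prune_Suc_odd)
    then have "path (prune j) q k (case_nat q \<pi>) (Suc m)" "case_nat q \<pi> (Suc m) \<in> F"
      using path_Cons IH assms(2) by (auto simp: path_def)
    then show ?thesis using IH False prune_Suc_odd unfolding reaches_F_def by blast
  qed
qed

lemma dup_play_cong: "(\<And>y. y \<le> x \<Longrightarrow> \<rho> y = \<rho>' y) \<Longrightarrow> dup_play \<sigma> s \<rho> \<beta> x = dup_play \<sigma> s \<rho>' \<beta> x"
  by (induction x) auto

lemma steps_dup_play:
  "dup_strategy \<delta> \<sigma> \<Longrightarrow> steps k \<rho> \<Longrightarrow> steps k (dup_play \<sigma> s \<rho> (\<lambda>x. \<alpha> (k + x)))"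
  by (auto simp: steps_def dup_strategy_def)

text \<open>Replaying a winning Duplicator strategy for \<open>p \<preceq>\<^sub>d\<^sub>e s\<close> keeps Duplicator inside every
  stage of the pruning in which Spoiler stays; the future of Spoiler's run that makes a node
  survive a stage is glued onto the run before it is replayed.\<close>

context
  fixes \<sigma> :: "'q \<Rightarrow> 'q \<Rightarrow> 'a \<Rightarrow> 'q \<Rightarrow> 'q" and p s :: 'q and k :: nat
  assumes strategy: "dup_strategy \<delta> \<sigma>"
    and winning: "\<forall>\<beta> \<rho>. is_run \<delta> p \<beta> \<rho> \<longrightarrow> (\<forall>i. \<rho> i \<in> F \<longrightarrow> (\<exists>k'\<ge>i. dup_play \<sigma> s \<rho> \<beta> k' \<in> F))"
    and s_in_S: "s \<in> S k"
begin

lemma ipath_dup_play_glue: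
  assumes IH: "\<And>\<rho> t. steps k \<rho> \<Longrightarrow> \<rho> 0 = p \<Longrightarrow> (\<rho> t, k + t) \<in> prune j
                 \<Longrightarrow> (dup_play \<sigma> s \<rho> (\<lambda>x. \<alpha> (k + x)) t, k + t) \<in> prune j"
    and \<rho>: "steps k \<rho>" "\<rho> 0 = p" and \<pi>: "ipath (prune j) (\<rho> t) (k + t) \<pi>"
  shows "ipath (prune j) (dup_play \<sigma> s \<rho> (\<lambda>x. \<alpha> (k + x)) t) (k + t)
           (\<lambda>y. dup_play \<sigma> s (glue t \<rho> \<pi>) (\<lambda>x. \<alpha> (k + x)) (t + y))"
proof -
  let ?d = "\<lambda>\<rho>. dup_play \<sigma> s \<rho> (\<lambda>x. \<alpha> (k + x))"
  have glued: "steps k (glue t \<rho> \<pi>)"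
    using steps_glue[of k \<rho> t \<pi>] \<rho> \<pi> by (auto simp: ipath_def steps_imp_steps_upto)
  have "glue t \<rho> \<pi> (t + y) = \<pi> y" for y using glue_add[of \<pi> \<rho> t y] \<pi> by (simp add: ipath_def)
  then have "(?d (glue t \<rho> \<pi>) (t + y), k + (t + y)) \<in> prune j" for y
    using IH[OF glued, of "t + y"] \<rho>(2) \<pi> by (simp add: ipath_def glue_def add.assoc)
  moreover have "steps (k + t) (\<lambda>y. ?d (glue t \<rho> \<pi>) (t + y))"
    using steps_shift[OF steps_dup_play[OF strategy glued]] .
  moreover have "?d (glue t \<rho> \<pi>) t = ?d \<rho> t" by (rule dup_play_cong) (simp add: glue_def)
  ultimately show ?thesis by (simp add: ipath_def add.assoc)
qed

lemma reaches_F_dup_play: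
  assumes IH: "\<And>\<rho> t. steps k \<rho> \<Longrightarrow> \<rho> 0 = p \<Longrightarrow> (\<rho> t, k + t) \<in> prune j
                 \<Longrightarrow> (dup_play \<sigma> s \<rho> (\<lambda>x. \<alpha> (k + x)) t, k + t) \<in> prune j"
    and \<rho>: "steps k \<rho>" "\<rho> 0 = p" and \<pi>: "ipath (prune j) (\<rho> t) (k + t) \<pi>" "\<pi> m \<in> F"
  shows "reaches_F (prune j) (dup_play \<sigma> s \<rho> (\<lambda>x. \<alpha> (k + x)) t) (k + t)"
proof -
  let ?d = "\<lambda>\<rho>. dup_play \<sigma> s \<rho> (\<lambda>x. \<alpha> (k + x))"
  let ?r = "glue t \<rho> \<pi>"
  have "steps k ?r"
    using steps_glue[of k \<rho> t \<pi>] \<rho>(1) \<pi>(1) by (simp add: ipath_def steps_imp_steps_upto)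
  moreover have "?r 0 = p" using \<rho>(2) by (simp add: glue_def)
  ultimately have "is_run \<delta> p (\<lambda>x. \<alpha> (k + x)) ?r" using steps_is_run by metis
  moreover have "?r (t + m) \<in> F" using \<pi> glue_add[of \<pi> \<rho> t m] by (simp add: ipath_def)
  ultimately obtain k' where k': "t + m \<le> k'" "?d ?r k' \<in> F"
    using winning[rule_format, of _ ?r "t + m"] by blast
  have "path (prune j) (?d \<rho> t) (k + t) (\<lambda>y. ?d ?r (t + y)) (k' - t)"
    using ipath_imp_path[OF ipath_dup_play_glue[OF IH \<rho> \<pi>(1)]] .
  moreover have "?d ?r (t + (k' - t)) \<in> F" using k' by simp
  ultimately show ?thesis unfolding reaches_F_def by blast
qed

lemma dup_play_prune:
  assumes "steps k \<rho>" "\<rho> 0 = p" "(\<rho> t, k + t) \<in> prune j"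
  shows "(dup_play \<sigma> s \<rho> (\<lambda>x. \<alpha> (k + x)) t, k + t) \<in> prune j"
  using assms
proof (induction j arbitrary: \<rho> t)
  case 0
  then show ?case using steps_in_S[OF steps_dup_play[OF strategy 0(1)]] s_in_S by simp
next
  case (Suc j)
  let ?d = "\<lambda>\<rho>. dup_play \<sigma> s \<rho> (\<lambda>x. \<alpha> (k + x))"
  have "(\<rho> t, k + t) \<in> prune j" using Suc.prems(3) prune_Suc_subset by blast
  then have "(?d \<rho> t, k + t) \<in> prune j" by (rule Suc.IH[OF Suc.prems(1,2)])
  moreover have "has_ipath (prune j) (?d \<rho> t) (k + t)" if even: "even j"
  proof -
    obtain \<pi> where "ipath (prune j) (\<rho> t) (k + t) \<pi>"
      using Suc.prems(3) unfolding prune_Suc_even[OF even] has_ipath_def by blast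
    then show ?thesis using ipath_dup_play_glue[OF Suc.IH Suc.prems(1,2)] unfolding has_ipath_def by blast
  qed
  moreover have "reaches_F (prune j) (?d \<rho> t) (k + t)" if odd: "odd j"
  proof -
    obtain i where j: "j = Suc (2 * i)" using odd oddE by fastforce
    have "(\<rho> t, k + t) \<in> prune j" "reaches_F (prune j) (\<rho> t) (k + t)"
      using Suc.prems(3) prune_Suc_odd[OF odd] by auto
    then obtain \<pi> m where \<pi>: "ipath (prune j) (\<rho> t) (k + t) \<pi>" "\<pi> m \<in> F"
      using reaches_F_ipath[of "\<rho> t" "k + t" i] unfolding j[symmetric] by blast
    from reaches_F_dup_play[OF Suc.IH Suc.prems(1,2) \<pi>] show ?thesis .
  qed
  ultimately show ?case by (cases "even j") (simp_all add: prune_Suc_even prune_Suc_odd)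
qed

end

lemma path_prune_delayed_sim:
  assumes "delayed_sim \<delta> F p s" "s \<in> S k" "path (prune j) p k \<pi> m"
  shows "\<exists>\<pi>'. path (prune j) s k \<pi>' m"
proof -
  obtain \<sigma> where \<sigma>: "dup_strategy \<delta> \<sigma>"
    "\<forall>\<beta> \<rho>. is_run \<delta> p \<beta> \<rho> \<longrightarrow> (\<forall>i. \<rho> i \<in> F \<longrightarrow> (\<exists>k'\<ge>i. dup_play \<sigma> s \<rho> \<beta> k' \<in> F))"
    using assms(1) by (auto simp: delayed_sim_def)
  have "path (prune 0) p k \<pi> m" using path_subset[OF assms(3) prune_antimono[of 0 j]] by simp
  then obtain \<rho> where \<rho>: "ipath (prune 0) p k \<rho>" "\<forall>j\<le>m. \<rho> j = \<pi> j"
    using path_prune_0_extend by blast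
  let ?d = "dup_play \<sigma> s \<rho> (\<lambda>x. \<alpha> (k + x))"
  have "(?d t, k + t) \<in> prune j" if "t \<le> m" for t
    using dup_play_prune[OF \<sigma> assms(2), of \<rho> t j] \<rho> assms(3) that by (auto simp: ipath_def path_def)
  moreover have "steps k ?d" using steps_dup_play[OF \<sigma>(1)] \<rho> by (simp add: ipath_def)
  ultimately have "path (prune j) s k ?d m" by (simp add: path_def steps_imp_steps_upto)
  then show ?thesis by blast
qed

lemma prune_delayed_sim:
  assumes "delayed_sim \<delta> F p s" "s \<in> S k" "(p, k) \<in> prune j"
  shows "(s, k) \<in> prune j"
proof -
  have "path (prune j) p k (\<lambda>_. p) 0" using assms(3) by (simp add: path_def steps_upto_def)
  then obtain \<pi>' where "path (prune j) s k \<pi>' 0" using path_prune_delayed_sim assms(1,2) by blast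
  then show ?thesis by (auto simp: path_def)
qed

lemma ex_path_prefix: "\<exists>\<pi>. path G q k \<pi> m \<Longrightarrow> m' \<le> m \<Longrightarrow> \<exists>\<pi>. path G q k \<pi> m'"
  using path_prefix by blast

lemma koenig:
  assumes "\<And>K. \<exists>\<pi>. path G q k \<pi> K"
  shows "has_ipath G q k"
proof -
  let ?P = "\<lambda>q k. \<forall>K. \<exists>\<pi>. path G q k \<pi> K"
  have "\<exists>q'\<in>\<delta> q (\<alpha> k). ?P q' (Suc k) \<and> True" if P: "?P q k" for q k
  proof -
    have "\<exists>q'\<in>\<delta> q (\<alpha> k). \<exists>\<pi>. path G q' (Suc k) \<pi> K" for K
      using P[rule_format, of "Suc K"] path_tl by blast
    then have "\<exists>q'\<in>\<delta> q (\<alpha> k). \<forall>K. \<exists>\<pi>. path G q' (Suc k) \<pi> K"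
      by (intro ex_in_finite_forall_downclosed[where P="\<lambda>q K. \<exists>\<pi>. path G q (Suc k) \<pi> K"] finite)
        (use ex_path_prefix in blast)+
    then show ?thesis by simp
  qed
  from ex_steps_invariant[of ?P, OF _ this] obtain \<rho> where
    \<rho>: "\<rho> 0 = q" "steps k \<rho>" "\<And>j. ?P (\<rho> j) (k + j)"
    using assms by blast
  have "(\<rho> j, k + j) \<in> G" for j
    using \<rho>(3)[of j, rule_format, of 0] by (auto simp: path_def)
  then show ?thesis using \<rho>(1,2) by (auto simp: has_ipath_def ipath_def)
qed

lemma has_ipath_if_long_paths:
  assumes "\<And>d. \<exists>q\<in>A. \<exists>\<pi>. path G q k \<pi> d"
  shows "\<exists>q\<in>A. has_ipath G q k"
proof -
  have "\<exists>q\<in>A. \<forall>d. \<exists>\<pi>. path G q k \<pi> d"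
    by (intro ex_in_finite_forall_downclosed[where P="\<lambda>q d. \<exists>\<pi>. path G q k \<pi> d"] finite)
      (use assms ex_path_prefix in blast)+
  then show ?thesis
    using koenig by blast
qed

lemma has_ipath_if_paths_extend_back:
  assumes nonempty: "\<And>k. k0 \<le> k \<Longrightarrow> \<exists>q\<in>A k. (q, k) \<in> G"
    and extend: "\<And>k q' \<pi> d. k0 \<le> k \<Longrightarrow> q' \<in> A (Suc k) \<Longrightarrow> path G q' (Suc k) \<pi> d
                 \<Longrightarrow> \<exists>q\<in>A k. \<exists>\<pi>'. path G q k \<pi>' (Suc d)"
  shows "\<exists>q\<in>A k0. has_ipath G q k0"
proof -
  have "\<forall>k\<ge>k0. \<exists>q\<in>A k. \<exists>\<pi>. path G q k \<pi> d" for d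
  proof (induction d)
    case 0
    have "path G q k (\<lambda>_. q) 0" if "(q, k) \<in> G" for q k using that by (simp add: path_def steps_upto_def)
    then show ?case using nonempty by blast
  next
    case (Suc d)
    then show ?case using extend by (meson le_SucI)
  qed
  then show ?thesis using has_ipath_if_long_paths by blast
qed

end

section \<open>Ranks in a rejecting run DAG\<close>

locale rejecting_dag = run_dag \<delta> F \<alpha> S for \<delta> :: "('q::finite, 'a) trans" and F \<alpha> S +
  assumes rejecting: "\<And>k \<pi>. steps k \<pi> \<Longrightarrow> \<pi> 0 \<in> S k \<Longrightarrow> \<not> (\<exists>\<^sub>\<infinity>j. \<pi> j \<in> F)"
begin

lemma ex_F_free_node:
  assumes "(q0, k0) \<in> prune (Suc (2 * i))"
  shows "\<exists>q k. (q, k) \<in> prune (Suc (2 * i)) \<and> \<not> reaches_F (prune (Suc (2 * i))) q k"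
proof (rule ccontr)
  let ?H = "prune (Suc (2 * i))"
  assume "\<not> ?thesis"
  then have reach: "reaches_F ?H q k" if "(q, k) \<in> ?H" for q k using that by blast
  let ?d = "F_dist ?H"
  have "\<exists>q'\<in>\<delta> q (\<alpha> k). (q', Suc k) \<in> ?H \<and> (q \<notin> F \<longrightarrow> ?d q' (Suc k) < ?d q k)"
    if qH: "(q, k) \<in> ?H" for q k
  proof (cases "q \<in> F")
    case True
    then show ?thesis using prune_odd_succ[OF qH] by blast
  next
    case False
    then show ?thesis using F_dist_Suc_less[OF reach[OF qH]] by blast
  qed
  from ex_steps_invariant[of "\<lambda>q k. (q, k) \<in> ?H" q0 k0 "\<lambda>q k q'. q \<notin> F \<longrightarrow> ?d q' (Suc k) < ?d q k",
      OF assms this]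
  obtain \<rho> where \<rho>: "\<rho> 0 = q0" "steps k0 \<rho>"
    and inv: "\<And>j. (\<rho> j, k0 + j) \<in> ?H \<and> (\<rho> j \<notin> F \<longrightarrow> ?d (\<rho> (Suc j)) (Suc (k0 + j)) < ?d (\<rho> j) (k0 + j))"
    by blast
  have "\<exists>\<^sub>\<infinity>j. \<rho> j \<in> F"
  proof (rule ccontr)
    assume "\<not> (\<exists>\<^sub>\<infinity>j. \<rho> j \<in> F)"
    then have "\<forall>\<^sub>\<infinity>j. \<rho> j \<notin> F" by simp
    then have "\<forall>\<^sub>\<infinity>j. ?d (\<rho> (Suc j)) (k0 + Suc j) < ?d (\<rho> j) (k0 + j)"
      by (rule MOST_mono) (use inv in simp)
    then show False using not_MOST_nat_decreasing[of "\<lambda>j. ?d (\<rho> j) (k0 + j)"] by simp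
  qed
  moreover have "\<rho> 0 \<in> S k0" using inv[of 0] prune_in_S by (metis add_0_right)
  ultimately show False using rejecting[OF \<rho>(2)] by blast
qed

lemma F_free_ipath:
  assumes "(q, k) \<in> prune (Suc (2 * i))" "\<not> reaches_F (prune (Suc (2 * i))) q k"
  shows "\<exists>\<pi>. ipath (prune (Suc (2 * i))) q k \<pi> \<and> (\<forall>y. (\<pi> y, k + y) \<notin> prune (Suc (Suc (2 * i))))"
proof -
  obtain \<pi> where "ipath (prune (2 * i)) q k \<pi>" using assms(1) by (auto simp: prune_Suc_even has_ipath_def)
  then have \<pi>: "ipath (prune (Suc (2 * i))) q k \<pi>" by (rule ipath_prune_odd)
  have "(\<pi> y, k + y) \<notin> prune (Suc (Suc (2 * i)))" for y
  proof
    assume "(\<pi> y, k + y) \<in> prune (Suc (Suc (2 * i)))"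
    then obtain \<pi>' m where "path (prune (Suc (2 * i))) (\<pi> y) (k + y) \<pi>' m" "\<pi>' m \<in> F"
      by (auto simp: prune_Suc_odd reaches_F_def)
    then have "path (prune (Suc (2 * i))) q k (glue y \<pi> \<pi>') (y + m) \<and> glue y \<pi> \<pi>' (y + m) \<in> F"
      using path_glue[OF ipath_imp_path[OF \<pi>, of y]] by simp
    then have "reaches_F (prune (Suc (2 * i))) q k" unfolding reaches_F_def by blast
    with assms(2) show False by blast
  qed
  with \<pi> show ?thesis by blast
qed

lemma prune_width: "\<forall>\<^sub>\<infinity>k. card {q. (q, k) \<in> prune (2 * i)} \<le> card (UNIV :: 'q set) - i"
proof (induction i)
  case 0
  show ?case by (simp add: card_mono)
next
  case (Suc i)
  show ?case
  proof (cases "prune (Suc (2 * i)) = {}")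
    case True
    then have "prune (2 * Suc i) = {}" using prune_Suc_subset[of "Suc (2 * i)"] by auto
    then show ?thesis by simp
  next
    case False
    then obtain q1 k1 where "(q1, k1) \<in> prune (Suc (2 * i))"
      "\<not> reaches_F (prune (Suc (2 * i))) q1 k1" using ex_F_free_node by fast
    then obtain \<pi> where \<pi>: "ipath (prune (Suc (2 * i))) q1 k1 \<pi>"
      "\<And>y. (\<pi> y, k1 + y) \<notin> prune (2 * Suc i)"
      using F_free_ipath by fastforce
    have step: "card {q. (q, k) \<in> prune (2 * Suc i)} \<le> card (UNIV :: 'q set) - Suc i"
      if k: "k1 \<le> k \<and> card {q. (q, k) \<in> prune (2 * i)} \<le> card (UNIV :: 'q set) - i" for k
    proof -
      let ?A = "{q. (q, k) \<in> prune (2 * i)}"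
      obtain y where y: "k = k1 + y" using k le_Suc_ex by blast
      have "\<pi> y \<in> ?A" using \<pi>(1) y prune_Suc_subset by (auto simp: ipath_def)
      have "{q. (q, k) \<in> prune (2 * Suc i)} \<subseteq> ?A - {\<pi> y}"
        using \<pi>(2)[of y] y prune_antimono[of "2 * i" "2 * Suc i"] by auto
      then have "card {q. (q, k) \<in> prune (2 * Suc i)} \<le> card (?A - {\<pi> y})" by (intro card_mono) auto
      also have "\<dots> = card ?A - 1" using \<open>\<pi> y \<in> ?A\<close> by (simp add: card_Diff_singleton)
      finally show ?thesis using k by arith
    qed
    show ?thesis using MOST_conjI[OF MOST_ge_nat[of k1] Suc.IH] by (rule MOST_mono) (rule step)
  qed
qed

lemma prune_empty: "prune (Suc (2 * card (UNIV :: 'q set))) = {}"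
proof (rule ccontr)
  let ?N = "card (UNIV :: 'q set)"
  obtain l where l: "\<And>k. l \<le> k \<Longrightarrow> card {q. (q, k) \<in> prune (2 * ?N)} = 0"
    using prune_width[of ?N] by (auto simp: MOST_nat_le)
  assume "prune (Suc (2 * ?N)) \<noteq> {}"
  then obtain q k \<pi> where "ipath (prune (2 * ?N)) q k \<pi>"
    by (auto simp: prune_Suc_even has_ipath_def)
  then have "(\<pi> l, k + l) \<in> prune (2 * ?N)" by (simp add: ipath_def)
  with l[of "k + l"] show False by simp
qed

definition node_rank :: "'q \<Rightarrow> nat \<Rightarrow> nat" where
  "node_rank q k = (LEAST j. (q, k) \<notin> prune (Suc j))"

lemma node_rank_le: "node_rank q k \<le> 2 * card (UNIV :: 'q set)"
  unfolding node_rank_def using prune_empty by (intro Least_le) simp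

lemma prune_iff_node_rank:
  assumes "q \<in> S k"
  shows "(q, k) \<in> prune j \<longleftrightarrow> j \<le> node_rank q k"
proof
  assume "(q, k) \<in> prune j"
  moreover have "\<exists>j. (q, k) \<notin> prune (Suc j)" using prune_empty by blast
  then have "(q, k) \<notin> prune (Suc (node_rank q k))" unfolding node_rank_def by (rule LeastI_ex)
  ultimately show "j \<le> node_rank q k"
    using prune_antimono[of "Suc (node_rank q k)" j] by (meson not_less_eq_eq subsetD)
next
  assume j: "j \<le> node_rank q k"
  show "(q, k) \<in> prune j"
  proof (cases j)
    case 0
    then show ?thesis using assms by simp
  next
    case (Suc j')
    then have "j' < node_rank q k" using j by simp
    then show ?thesis
      using not_less_Least[of j' "\<lambda>j. (q, k) \<notin> prune (Suc j)"] Suc by (simp add: node_rank_def)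
  qed
qed

lemma node_rank_F_even:
  assumes "q \<in> F" "q \<in> S k"
  shows "even (node_rank q k)"
proof (rule ccontr)
  assume "odd (node_rank q k)"
  then obtain i where i: "node_rank q k = Suc (2 * i)" by (metis oddE Suc_eq_plus1)
  then have "(q, k) \<in> prune (Suc (2 * i))" using prune_iff_node_rank[OF assms(2)] by simp
  moreover from this have "path (prune (Suc (2 * i))) q k (\<lambda>_. q) 0"
    by (simp add: path_def steps_upto_def)
  then have "reaches_F (prune (Suc (2 * i))) q k" using assms(1) unfolding reaches_F_def by blast
  ultimately have "(q, k) \<in> prune (Suc (Suc (2 * i)))" by (simp add: prune_Suc_odd)
  then show False using prune_iff_node_rank[OF assms(2)] i by simp
qed

lemma node_rank_Suc_le:
  assumes "q \<in> S k" "q' \<in> \<delta> q (\<alpha> k)"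
  shows "node_rank q' (Suc k) \<le> node_rank q k"
proof -
  have "q' \<in> S (Suc k)" using S_closed assms .
  then have "(q', Suc k) \<in> prune (node_rank q' (Suc k))" by (simp add: prune_iff_node_rank)
  then have "(q, k) \<in> prune (node_rank q' (Suc k))" using prune_pred assms by blast
  then show ?thesis using prune_iff_node_rank[OF assms(1)] by blast
qed

lemma node_rank_delayed_sim:
  assumes "delayed_sim \<delta> F p s" "p \<in> S k" "s \<in> S k"
  shows "node_rank p k \<le> node_rank s k"
proof -
  have "(p, k) \<in> prune (node_rank p k)" using assms(2) by (simp add: prune_iff_node_rank)
  then have "(s, k) \<in> prune (node_rank p k)" using prune_delayed_sim assms(1,3) by blast
  then show ?thesis using prune_iff_node_rank[OF assms(3)] by blast
qed

end

context rejecting_dag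
begin

definition max_rank :: "nat \<Rightarrow> nat" where
  "max_rank k = Max ((\<lambda>q. node_rank q k) ` S k)"

lemma node_rank_le_max_rank: "q \<in> S k \<Longrightarrow> node_rank q k \<le> max_rank k"
  unfolding max_rank_def by simp

lemma max_rank_attained:
  assumes "S k \<noteq> {}"
  shows "\<exists>q\<in>S k. node_rank q k = max_rank k"
proof -
  have "max_rank k \<in> (\<lambda>q. node_rank q k) ` S k" unfolding max_rank_def using assms by (intro Max_in) auto
  then show ?thesis by auto
qed

text \<open>The breakpoint argument: an infinite backward-closed chain of nodes of one even rank
  would contain an infinite path, which survives the next pruning stage.\<close>

lemma no_even_rank_chain:
  assumes "even i"
    and chain: "\<And>k. k0 \<le> k \<Longrightarrow> B k \<noteq> {} \<and> B k \<subseteq> S k \<and> (\<forall>q\<in>B k. node_rank q k = i)"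
    and pred: "\<And>k q'. k0 \<le> k \<Longrightarrow> q' \<in> B (Suc k) \<Longrightarrow> \<exists>q\<in>B k. q' \<in> \<delta> q (\<alpha> k)"
  shows False
proof -
  have in_prune: "(q, k) \<in> prune i" if "k0 \<le> k" "q \<in> B k" for q k
  proof -
    have "q \<in> S k" "node_rank q k = i" using chain[OF that(1)] that(2) by auto
    then show ?thesis using prune_iff_node_rank[of q k i] by simp
  qed
  have "\<exists>q\<in>B k0. has_ipath (prune i) q k0"
  proof (rule has_ipath_if_paths_extend_back)
    show "\<exists>q\<in>B k. (q, k) \<in> prune i" if "k0 \<le> k" for k using chain[OF that] in_prune[OF that] by blast
  next
    fix k q' \<pi> d assume k: "k0 \<le> k" and q': "q' \<in> B (Suc k)" "path (prune i) q' (Suc k) \<pi> d"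
    then obtain q where q: "q \<in> B k" "q' \<in> \<delta> q (\<alpha> k)" using pred by blast
    then have "path (prune i) q k (case_nat q \<pi>) (Suc d)"
      using path_Cons[OF in_prune[OF k q(1)] _ q'(2)] q'(2) by (simp add: path_def)
    then show "\<exists>q\<in>B k. \<exists>\<pi>'. path (prune i) q k \<pi>' (Suc d)" using q(1) by blast
  qed
  then obtain q where q: "q \<in> B k0" "has_ipath (prune i) q k0" by blast
  then have "(q, k0) \<in> prune (Suc i)" using in_prune[OF order_refl] prune_Suc_even[OF \<open>even i\<close>] by blast
  moreover have "q \<in> S k0" "node_rank q k0 = i" using chain[OF order_refl] q(1) by auto
  ultimately show False using prune_iff_node_rank[of q k0 "Suc i"] by simp
qed

end

locale saturated_dag = rejecting_dag \<delta> F \<alpha> S for \<delta> :: "('q::finite, 'a) trans" and F \<alpha> S +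
  assumes S_Suc_covered: "\<And>k p. p \<in> S (Suc k) \<Longrightarrow> \<exists>q\<in>S k. \<exists>s\<in>\<delta> q (\<alpha> k). delayed_sim \<delta> F p s"
    and S_nonempty: "\<And>k. S k \<noteq> {}"
begin

lemma max_rank_Suc_le: "max_rank (Suc k) \<le> max_rank k"
proof -
  obtain p where p: "p \<in> S (Suc k)" "node_rank p (Suc k) = max_rank (Suc k)"
    using max_rank_attained S_nonempty by blast
  obtain q s where qs: "q \<in> S k" "s \<in> \<delta> q (\<alpha> k)" "delayed_sim \<delta> F p s"
    using S_Suc_covered[OF p(1)] by blast
  have "node_rank p (Suc k) \<le> node_rank s (Suc k)"
    using node_rank_delayed_sim[OF qs(3) p(1) S_closed[OF qs(1,2)]] .
  also have "\<dots> \<le> node_rank q k" using node_rank_Suc_le qs(1,2) .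
  also have "\<dots> \<le> max_rank k" using node_rank_le_max_rank qs(1) .
  finally show ?thesis using p(2) by simp
qed

lemma max_rank_limit_odd:
  assumes r: "\<And>k. l \<le> k \<Longrightarrow> max_rank k = r"
  shows "odd r"
proof
  assume "even r"
  have top: "\<exists>q\<in>S k. (q, k) \<in> prune r" if "l \<le> k" for k
  proof -
    obtain q where "q \<in> S k" "node_rank q k = max_rank k" using max_rank_attained[OF S_nonempty] by blast
    then show ?thesis using r[OF that] prune_iff_node_rank[of q k r] by auto
  qed
  have "\<exists>q\<in>S l. has_ipath (prune r) q l"
  proof (rule has_ipath_if_paths_extend_back)
    show "\<exists>q\<in>S k. (q, k) \<in> prune r" if "l \<le> k" for k using top[OF that] .
  next
    fix k p \<pi> d assume p: "p \<in> S (Suc k)" "path (prune r) p (Suc k) \<pi> d"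
    obtain q s where qs: "q \<in> S k" "s \<in> \<delta> q (\<alpha> k)" "delayed_sim \<delta> F p s"
      using S_Suc_covered[OF p(1)] by blast
    obtain \<pi>' where \<pi>': "path (prune r) s (Suc k) \<pi>' d"
      using path_prune_delayed_sim[OF qs(3) S_closed[OF qs(1,2)] p(2)] by blast
    have "(q, k) \<in> prune r" using prune_pred[OF qs(1,2) path_start[OF \<pi>']] .
    then have "path (prune r) q k (case_nat q \<pi>') (Suc d)"
      using path_Cons[OF _ _ \<pi>'] qs(2) \<pi>' by (simp add: path_def)
    then show "\<exists>q\<in>S k. \<exists>\<pi>'. path (prune r) q k \<pi>' (Suc d)" using qs(1) by blast
  qed
  then obtain q where q: "q \<in> S l" "has_ipath (prune r) q l" by blast
  then have "(q, l) \<in> prune r" unfolding has_ipath_def using ipath_start by blast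
  then have "(q, l) \<in> prune (Suc r)" using q(2) prune_Suc_even[OF \<open>even r\<close>] by blast
  then have "Suc r \<le> node_rank q l" using prune_iff_node_rank q(1) by blast
  moreover have "node_rank q l \<le> r" using node_rank_le_max_rank[OF q(1)] r[of l] by simp
  ultimately show False by simp
qed

lemma odd_rank_eventually_present:
  assumes "odd j" "j \<le> max_rank k"
  shows "\<forall>\<^sub>\<infinity>k. \<exists>q\<in>S k. node_rank q k = j"
proof -
  obtain i where j: "j = Suc (2 * i)" using \<open>odd j\<close> oddE by fastforce
  obtain q where "q \<in> S k" "node_rank q k = max_rank k" using max_rank_attained S_nonempty by blast
  then have "(q, k) \<in> prune j" using prune_iff_node_rank assms(2) by simp
  then obtain q1 k1 where "(q1, k1) \<in> prune j" "\<not> reaches_F (prune j) q1 k1"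
    using ex_F_free_node j by blast
  then obtain \<pi> where \<pi>: "ipath (prune j) q1 k1 \<pi>" "\<And>y. (\<pi> y, k1 + y) \<notin> prune (Suc j)"
    using F_free_ipath j by blast
  have "\<exists>q\<in>S k. node_rank q k = j" if "k1 \<le> k" for k
  proof -
    obtain y where y: "k = k1 + y" using \<open>k1 \<le> k\<close> le_Suc_ex by blast
    have "(\<pi> y, k) \<in> prune j" "(\<pi> y, k) \<notin> prune (Suc j)" using \<pi> y by (auto simp: ipath_def)
    moreover from this(1) have "\<pi> y \<in> S k" by (rule prune_in_S)
    ultimately show ?thesis
      using prune_iff_node_rank[of "\<pi> y" k j] prune_iff_node_rank[of "\<pi> y" k "Suc j"]
      by (intro bexI[of _ "\<pi> y"]) auto
  qed
  then show ?thesis by (auto simp: MOST_nat_le)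
qed

lemma eventually_tight:
  "\<exists>r. odd r \<and> (\<forall>\<^sub>\<infinity>k. max_rank k = r \<and> (\<forall>j. odd j \<and> j \<le> r \<longrightarrow> (\<exists>q\<in>S k. node_rank q k = j)))"
proof -
  obtain l where l: "\<forall>k\<ge>l. max_rank k = max_rank l"
    using antimono_nat_eventually_const[of max_rank, OF max_rank_Suc_le] ..
  define r where "r = max_rank l"
  have "\<forall>\<^sub>\<infinity>k. odd j \<longrightarrow> (\<exists>q\<in>S k. node_rank q k = j)" if "j \<le> r" for j
  proof (cases "odd j")
    case True
    have "\<forall>\<^sub>\<infinity>k. \<exists>q\<in>S k. node_rank q k = j"
      using odd_rank_eventually_present[OF True, of l] that unfolding r_def .
    then show ?thesis by (rule MOST_mono) simp
  qed simp
  then have "\<forall>\<^sub>\<infinity>k. \<forall>j\<in>{..r}. odd j \<longrightarrow> (\<exists>q\<in>S k. node_rank q k = j)"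
    by (subst MOST_finite_Ball_distrib) auto
  moreover have "\<forall>\<^sub>\<infinity>k. max_rank k = r" unfolding MOST_nat_le r_def using l by blast
  ultimately have "\<forall>\<^sub>\<infinity>k. max_rank k = r \<and> (\<forall>j\<in>{..r}. odd j \<longrightarrow> (\<exists>q\<in>S k. node_rank q k = j))"
    by (rule MOST_conjI[rotated])
  then have "\<forall>\<^sub>\<infinity>k. max_rank k = r \<and> (\<forall>j. odd j \<and> j \<le> r \<longrightarrow> (\<exists>q\<in>S k. node_rank q k = j))"
    by (rule MOST_mono) auto
  moreover have "odd r" by (rule max_rank_limit_odd[of l]) (use l r_def in blast)
  ultimately show ?thesis by blast
qed

end

section \<open>The generalised construction and its soundness\<close>

definition gen_delta :: "('q::finite, 'a) trans \<Rightarrow> ('q set \<Rightarrow> 'q set) \<Rightarrow> 'q macro set \<Rightarrow> ('q bstate, 'a) trans" where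
  "gen_delta \<delta> g X s a = (case s of
     Inl S \<Rightarrow> {Inl (g (dset \<delta> S a))}
              \<union> {Inr (S', {}, f, 0) | S' f. (S', {}, f, 0) \<in> X \<and> S' = g (dset \<delta> S a)}
   | Inr m \<Rightarrow> (if m \<in> X then
       {Inr m' | m'. m' \<in> X \<and> fst m' = g (dset \<delta> (fst m) a) \<and> step3_ok \<delta> m a m'}
       else {}))"

lemma sat_delta_eq_gen_delta: "sat_delta \<delta> F X = gen_delta \<delta> (str \<delta> F) X"
  by (intro ext) (simp add: sat_delta_def gen_delta_def)

lemma schewe_delta_eq_gen_delta: "schewe_delta \<delta> F = gen_delta \<delta> id (Q2 F)"
proof (intro ext)
  fix s a
  show "schewe_delta \<delta> F s a = gen_delta \<delta> id (Q2 F) s a"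
    by (cases s) (auto simp: schewe_delta_def gen_delta_def Q2_def)
qed

lemma schewe_final_eq_sat_final: "schewe_final F = sat_final (Q2 F)"
  by (simp add: schewe_final_def sat_final_def)

definition states_of :: "'q bstate \<Rightarrow> 'q set" where
  "states_of b = (case b of Inl S \<Rightarrow> S | Inr m \<Rightarrow> fst m)"

lemma states_of_gen_delta: "b' \<in> gen_delta \<delta> g X b a \<Longrightarrow> states_of b' = g (dset \<delta> (states_of b) a)"
  by (cases b) (auto simp: gen_delta_def states_of_def split: if_splits)

lemma gen_delta_Inr_Inr: "b' \<in> gen_delta \<delta> g X (Inr m) a \<Longrightarrow> \<exists>m'. b' = Inr m'"
  by (auto simp: gen_delta_def split: if_splits)

lemma Inr_in_gen_delta_Inr:
  "Inr m' \<in> gen_delta \<delta> g X (Inr m) a \<longleftrightarrow>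
     m \<in> X \<and> m' \<in> X \<and> fst m' = g (dset \<delta> (fst m) a) \<and> step3_ok \<delta> m a m'"
  by (cases m' rule: prod_cases4) (auto simp: gen_delta_def)

lemma step3_ok_iff:
  "step3_ok \<delta> (S, B, f, i) a (S', B', f', i') \<longleftrightarrow>
      (\<forall>q\<in>S. \<forall>q'\<in>\<delta> q a. f' q' \<le> f q) \<and> rank f = rank f'
      \<and> ((B = {} \<and> i' = (i + 2) mod (rank f' + 1) \<and> B' = S' \<inter> f' -` {i'})
         \<or> (B \<noteq> {} \<and> i' = i \<and> B' = dset \<delta> B a \<inter> f' -` {i}))"
  by (simp add: step3_ok_def)

lemma dset_mem: "q \<in> P \<Longrightarrow> q' \<in> \<delta> q a \<Longrightarrow> q' \<in> dset \<delta> P a"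
  by (auto simp: dset_def)

lemma le_rank: "f q \<le> rank (f :: 'q::finite \<Rightarrow> nat)"
  unfolding rank_def by simp

text \<open>Between two resets the breakpoint index \<open>i\<close> runs through the even numbers below \<open>r\<close>
  cyclically; its cyclic distance to the target \<open>c\<close> drops at every reset that misses \<open>c\<close>.\<close>

lemma cyclic_distance_decreases:
  fixes i c r :: nat
  assumes "even i" "even c" "odd r" "i \<le> r" "c \<le> r" "i \<noteq> c" "(i + 2) mod (r + 1) \<noteq> c"
  defines "dist \<equiv> \<lambda>x. if x \<le> c then c - x else c + (r + 1) - x"
  shows "dist ((i + 2) mod (r + 1)) < dist i"
proof -
  obtain a b d where abd: "i = 2 * a" "c = 2 * b" "r = 2 * d + 1"
    using assms(1-3) by (metis evenE oddE)
  show ?thesis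
  proof (cases "i + 2 \<le> r")
    case True
    then have "(i + 2) mod (r + 1) = i + 2" by simp
    then show ?thesis using assms(5-7) True unfolding dist_def abd by auto
  next
    case False
    then have "(i + 2) mod (r + 1) = 0" using abd assms(4) by (simp add: mod_if)
    then show ?thesis using assms(4-7) False unfolding dist_def abd by auto
  qed
qed

locale breakpoint_run =
  fixes \<delta> :: "('q::finite, 'a) trans" and F :: "'q set" and \<alpha> :: "nat \<Rightarrow> 'a"
    and M :: "nat \<Rightarrow> 'q macro" and \<rho> :: "nat \<Rightarrow> 'q"
  assumes M_Q2: "\<And>k. M k \<in> Q2 F"
    and M_step: "\<And>k. step3_ok \<delta> (M k) (\<alpha> k) (M (Suc k))"
    and run_in_M: "\<And>k. \<rho> k \<in> fst (M k)"
    and run_step: "\<And>k. \<rho> (Suc k) \<in> \<delta> (\<rho> k) (\<alpha> k)"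
begin

definition brk :: "nat \<Rightarrow> 'q set" where "brk k = fst (snd (M k))"
definition rk :: "nat \<Rightarrow> 'q \<Rightarrow> nat" where "rk k = fst (snd (snd (M k)))"
definition idx :: "nat \<Rightarrow> nat" where "idx k = snd (snd (snd (M k)))"
definition r :: nat where "r = rank (rk 0)"

lemma M_eq: "M k = (fst (M k), brk k, rk k, idx k)"
  by (simp add: brk_def rk_def idx_def)

lemma tight_rk: "tight F (fst (M k)) (rk k)"
  using M_Q2[of k] M_eq[of k] by (auto simp: Q2_def)

lemma M_step_iff:
  "(\<forall>q\<in>fst (M k). \<forall>q'\<in>\<delta> q (\<alpha> k). rk (Suc k) q' \<le> rk k q) \<and> rank (rk k) = rank (rk (Suc k))
   \<and> ((brk k = {} \<and> idx (Suc k) = (idx k + 2) mod (rank (rk (Suc k)) + 1)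
         \<and> brk (Suc k) = fst (M (Suc k)) \<inter> rk (Suc k) -` {idx (Suc k)})
      \<or> (brk k \<noteq> {} \<and> idx (Suc k) = idx k \<and> brk (Suc k) = dset \<delta> (brk k) (\<alpha> k) \<inter> rk (Suc k) -` {idx k}))"
proof -
  have "step3_ok \<delta> (fst (M k), brk k, rk k, idx k) (\<alpha> k) (fst (M (Suc k)), brk (Suc k), rk (Suc k), idx (Suc k))"
    using M_step[of k] by (simp add: brk_def rk_def idx_def)
  then show ?thesis unfolding step3_ok_iff .
qed

lemma rank_rk: "rank (rk k) = r"
  by (induction k) (use M_step_iff r_def in auto)

lemma odd_r: "odd r"
  using tight_rk[of 0] by (simp add: tight_def r_def)

lemma rk_run_Suc_le: "rk (Suc k) (\<rho> (Suc k)) \<le> rk k (\<rho> k)"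
  using M_step_iff[of k] run_in_M run_step by blast

lemma idx_reset: "brk k = {} \<Longrightarrow> idx (Suc k) = (idx k + 2) mod (r + 1)"
  using M_step_iff[of k] rank_rk by auto

lemma idx_keep: "brk k \<noteq> {} \<Longrightarrow> idx (Suc k) = idx k"
  using M_step_iff[of k] by auto

lemma idx_le_r: "brk k = {} \<Longrightarrow> idx (Suc k) \<le> r"
  using idx_reset by (simp add: less_Suc_eq_le[symmetric])

lemma run_trapped:
  assumes c: "\<And>j. k \<le> j \<Longrightarrow> rk j (\<rho> j) = c" and "brk k = {}" "idx (Suc k) = c"
  shows "Suc k \<le> j \<Longrightarrow> \<rho> j \<in> brk j \<and> idx j = c"
proof (induction j rule: dec_induct)
  case base
  have "brk (Suc k) = fst (M (Suc k)) \<inter> rk (Suc k) -` {idx (Suc k)}" using M_step_iff[of k] assms(2) by auto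
  then show ?case using assms(3) run_in_M c[of "Suc k"] by auto
next
  case (step j)
  then have "brk j \<noteq> {}" by auto
  then have "idx (Suc j) = idx j" "brk (Suc j) = dset \<delta> (brk j) (\<alpha> j) \<inter> rk (Suc j) -` {idx j}"
    using M_step_iff[of j] by auto
  moreover have "\<rho> (Suc j) \<in> dset \<delta> (brk j) (\<alpha> j)" using step(3) run_step by (auto intro: dset_mem)
  ultimately show ?case using step c[of "Suc j"] by auto
qed

context
  fixes c k2 :: nat
  assumes c: "\<And>k. k2 \<le> k \<Longrightarrow> rk k (\<rho> k) = c"
    and resets: "\<exists>\<^sub>\<infinity>k. brk k = {}"
begin

lemma idx_reset_misses: "k2 \<le> k \<Longrightarrow> brk k = {} \<Longrightarrow> idx (Suc k) \<noteq> c"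
proof
  assume k: "k2 \<le> k" "brk k = {}" "idx (Suc k) = c"
  obtain j where "Suc k \<le> j" "brk j = {}" using resets by (auto simp: INFM_nat_le)
  then show False using run_trapped[of k c j] c k by auto
qed

lemma idx_avoids:
  assumes "k2 \<le> t" "brk t = {}"
  shows "Suc t \<le> k \<Longrightarrow> idx k \<noteq> c \<and> idx k \<le> r"
proof (induction k rule: dec_induct)
  case base
  then show ?case using idx_reset_misses idx_le_r assms by blast
next
  case (step k)
  then show ?case using idx_reset_misses[of k] idx_le_r[of k] idx_keep[of k] assms by (cases "brk k = {}") auto
qed

end

lemma finitely_many_resets:
  assumes "\<exists>\<^sub>\<infinity>k. \<rho> k \<in> F"
  shows "\<not> (\<exists>\<^sub>\<infinity>k. brk k = {})"
proof
  assume resets: "\<exists>\<^sub>\<infinity>k. brk k = {}"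
  obtain k2 where k2: "\<forall>k\<ge>k2. rk k (\<rho> k) = rk k2 (\<rho> k2)"
    using antimono_nat_eventually_const[of "\<lambda>k. rk k (\<rho> k)", OF rk_run_Suc_le] ..
  define c where "c = rk k2 (\<rho> k2)"
  have c: "\<And>k. k2 \<le> k \<Longrightarrow> rk k (\<rho> k) = c" using k2 c_def by blast
  obtain kf where "k2 \<le> kf" "\<rho> kf \<in> F" using assms by (auto simp: INFM_nat_le)
  then have "even c" using c tight_rk[of kf] by (force simp: tight_def is_ranking_def)
  have "c \<le> r" using le_rank[of "rk k2" "\<rho> k2"] c[of k2] unfolding rank_rk by simp
  obtain t where t: "k2 \<le> t" "brk t = {}" using resets by (auto simp: INFM_nat_le)
  define dist where "dist x = (if x \<le> c then c - x else c + (r + 1) - x)" for x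
  have dec: "dist (idx (Suc k)) < dist (idx k)" if "Suc t \<le> k" "brk k = {}" for k
    using cyclic_distance_decreases[of "idx k" c r] idx_reset[OF that(2)] tight_rk[of k]
      idx_avoids[OF c resets t] idx_avoids[OF c resets t, of "Suc k"] that \<open>even c\<close> \<open>c \<le> r\<close> odd_r
      M_Q2[of k] M_eq[of k]
    unfolding dist_def by (auto simp: Q2_def)
  have "\<forall>\<^sub>\<infinity>k. dist (idx (Suc k)) \<le> dist (idx k)"
    unfolding MOST_nat_le using dec idx_keep by (metis order.strict_implies_order order_refl)
  then have "\<forall>\<^sub>\<infinity>k. dist (idx (Suc k)) = dist (idx k)" by (rule MOST_antimono_nat_const)
  moreover have "\<exists>\<^sub>\<infinity>k. brk k = {} \<and> Suc t \<le> k" using INFM_conjI[OF resets MOST_ge_nat] .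
  ultimately have "\<exists>\<^sub>\<infinity>k. (brk k = {} \<and> Suc t \<le> k) \<and> dist (idx (Suc k)) = dist (idx k)"
    by (rule INFM_conjI[rotated])
  then obtain k where "brk k = {}" "Suc t \<le> k" "dist (idx (Suc k)) = dist (idx k)"
    using INFM_EX by blast
  then show False using dec by fastforce
qed

end

lemma run_in_states_of:
  assumes ext: "\<And>S. S \<subseteq> g S"
    and run: "is_run \<delta> q0 \<alpha> \<rho>" "q0 \<in> I" and brun: "is_run (gen_delta \<delta> g X) (Inl I) \<alpha> \<rho>B"
  shows "\<rho> k \<in> states_of (\<rho>B k)"
proof (induction k)
  case 0
  then show ?case using run brun by (simp add: is_run_def states_of_def)
next
  case (Suc k)
  have "\<rho> (Suc k) \<in> dset \<delta> (states_of (\<rho>B k)) (\<alpha> k)"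
    using Suc is_run_Suc[OF run(1)] by (rule dset_mem)
  then show ?case using states_of_gen_delta[OF is_run_Suc[OF brun]] ext by blast
qed

lemma gen_delta_run_stays_Inr:
  assumes "is_run (gen_delta \<delta> g X) b0 \<alpha> \<rho>B" "\<rho>B k1 = Inr m"
  shows "k1 \<le> k \<Longrightarrow> \<exists>m. \<rho>B k = Inr m"
proof (induction k rule: dec_induct)
  case base
  then show ?case using assms(2) by blast
next
  case (step k)
  then obtain m where "\<rho>B k = Inr m" by blast
  then have "\<rho>B (Suc k) \<in> gen_delta \<delta> g X (Inr m) (\<alpha> k)" using is_run_Suc[OF assms(1), of k] by simp
  then show ?case by (rule gen_delta_Inr_Inr)
qed

lemma breakpoint_run_suffix:
  assumes XQ: "X \<subseteq> Q2 F" and brun: "is_run (gen_delta \<delta> g X) b0 \<alpha> \<rho>B"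
    and M: "\<And>j. \<rho>B (j + k1) = Inr (M j)"
    and run: "is_run \<delta> q0 \<alpha> \<rho>" and in_states: "\<And>k. \<rho> k \<in> states_of (\<rho>B k)"
  shows "breakpoint_run \<delta> F (\<lambda>j. \<alpha> (j + k1)) M (\<lambda>j. \<rho> (j + k1))"
proof
  fix j
  have "Inr (M (Suc j)) \<in> gen_delta \<delta> g X (Inr (M j)) (\<alpha> (j + k1))"
    using is_run_Suc[OF brun, of "j + k1"] M[of j] M[of "Suc j"] by simp
  then have "M j \<in> X" "step3_ok \<delta> (M j) (\<alpha> (j + k1)) (M (Suc j))"
    unfolding Inr_in_gen_delta_Inr by auto
  then show "M j \<in> Q2 F" "step3_ok \<delta> (M j) (\<alpha> (j + k1)) (M (Suc j))" using XQ by auto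
  show "\<rho> (j + k1) \<in> fst (M j)" using in_states[of "j + k1"] M[of j] by (simp add: states_of_def)
  show "\<rho> (Suc j + k1) \<in> \<delta> (\<rho> (j + k1)) (\<alpha> (j + k1))" using is_run_Suc[OF run] by simp
qed

lemma gen_lang_subset_complement:
  assumes ext: "\<And>S. S \<subseteq> g S" and XQ: "X \<subseteq> Q2 F"
  shows "lang (gen_delta \<delta> g X) {Inl I} (sat_final X) \<subseteq> - lang \<delta> I F"
proof
  fix \<alpha> assume "\<alpha> \<in> lang (gen_delta \<delta> g X) {Inl I} (sat_final X)"
  then obtain \<rho>B b where brun: "is_run (gen_delta \<delta> g X) (Inl I) \<alpha> \<rho>B"
    and b: "b \<in> sat_final X" "\<exists>\<^sub>\<infinity>k. \<rho>B k = b"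
    by (auto simp: lang_def accepting_def)
  show "\<alpha> \<in> - lang \<delta> I F"
  proof
    assume "\<alpha> \<in> lang \<delta> I F"
    then obtain q0 \<rho> where run: "is_run \<delta> q0 \<alpha> \<rho>" "q0 \<in> I" and "accepting F \<rho>"
      by (auto simp: lang_def)
    then have inf_F: "\<exists>\<^sub>\<infinity>k. \<rho> k \<in> F" by (auto simp: accepting_def elim: INFM_mono)
    have in_states: "\<rho> k \<in> states_of (\<rho>B k)" for k using run_in_states_of[OF ext run brun] .
    obtain k1 where k1: "\<rho>B k1 = b" using b(2) INFM_EX by blast
    show False
    proof (cases b)
      case (Inl S)
      then show False using b(1) k1 in_states[of k1] by (auto simp: sat_final_def states_of_def)
    next
      case (Inr m1)
      define M where "M j = projr (\<rho>B (j + k1))" for j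
      have M: "\<rho>B (j + k1) = Inr (M j)" for j
        using gen_delta_run_stays_Inr[OF brun k1[unfolded Inr], of "j + k1"] by (auto simp: M_def)
      interpret breakpoint_run \<delta> F "\<lambda>j. \<alpha> (j + k1)" M "\<lambda>j. \<rho> (j + k1)"
        using breakpoint_run_suffix[OF XQ brun M run(1) in_states] .
      have "\<exists>\<^sub>\<infinity>j. brk j = {}"
      proof -
        have "\<exists>\<^sub>\<infinity>j. \<rho>B (j + k1) = b" unfolding INFM_nat_shift[of "\<lambda>j. \<rho>B j = b"] by (rule b(2))
        moreover have "brk j = {}" if "\<rho>B (j + k1) = b" for j
          using that b(1) M[of j] Inr by (auto simp: sat_final_def brk_def)
        ultimately show ?thesis by (auto elim: INFM_mono)
      qed
      moreover have "\<exists>\<^sub>\<infinity>j. \<rho> (j + k1) \<in> F" unfolding INFM_nat_shift[of "\<lambda>j. \<rho> j \<in> F"] by (rule inf_F)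
      ultimately show False using finitely_many_resets by blast
    qed
  qed
qed

section \<open>Completeness of the generalised construction\<close>

lemma delayed_sim_INFM_run:
  assumes "delayed_sim \<delta> F p s" "is_run \<delta> p \<beta> \<pi>" "\<exists>\<^sub>\<infinity>j. \<pi> j \<in> F"
  shows "\<exists>\<pi>'. is_run \<delta> s \<beta> \<pi>' \<and> (\<exists>\<^sub>\<infinity>j. \<pi>' j \<in> F)"
proof -
  obtain \<sigma> where \<sigma>: "dup_strategy \<delta> \<sigma>"
    and win: "\<forall>\<beta> \<pi>. is_run \<delta> p \<beta> \<pi> \<longrightarrow> (\<forall>i. \<pi> i \<in> F \<longrightarrow> (\<exists>k\<ge>i. dup_play \<sigma> s \<pi> \<beta> k \<in> F))"
    using assms(1) unfolding delayed_sim_def by blast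
  have "is_run \<delta> s \<beta> (dup_play \<sigma> s \<pi> \<beta>)"
    using \<sigma> assms(2) by (auto simp: is_run_def dup_strategy_def)
  moreover have "\<exists>\<^sub>\<infinity>j. dup_play \<sigma> s \<pi> \<beta> j \<in> F"
    unfolding INFM_nat_le
  proof
    fix m
    obtain i where "m \<le> i" "\<pi> i \<in> F" using assms(3) by (auto simp: INFM_nat_le)
    then show "\<exists>k\<ge>m. dup_play \<sigma> s \<pi> \<beta> k \<in> F" using win[rule_format, OF assms(2)] le_trans by blast
  qed
  ultimately show ?thesis by blast
qed

context run_dag
begin

lemma steps_iff_is_run: "steps k \<pi> \<longleftrightarrow> is_run \<delta> (\<pi> 0) (\<lambda>j. \<alpha> (k + j)) \<pi>"
  by (simp add: steps_def is_run_def)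

text \<open>Delayed simulation moves an \<open>F\<close>-recurrent run back by one level, through the simulating
  successor; induction on the level reduces rejection to level \<open>0\<close>.\<close>

lemma rejecting_if_rejecting_at_0:
  assumes rejecting_0: "\<And>\<pi>. steps 0 \<pi> \<Longrightarrow> \<pi> 0 \<in> S 0 \<Longrightarrow> \<not> (\<exists>\<^sub>\<infinity>j. \<pi> j \<in> F)"
    and covered: "\<And>k p. p \<in> S (Suc k) \<Longrightarrow> \<exists>q\<in>S k. \<exists>s\<in>\<delta> q (\<alpha> k). delayed_sim \<delta> F p s"
  shows "steps k \<pi> \<Longrightarrow> \<pi> 0 \<in> S k \<Longrightarrow> \<not> (\<exists>\<^sub>\<infinity>j. \<pi> j \<in> F)"
proof (induction k arbitrary: \<pi>)
  case 0
  then show ?case using rejecting_0 by blast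
next
  case (Suc k)
  show ?case
  proof
    assume inf_F: "\<exists>\<^sub>\<infinity>j. \<pi> j \<in> F"
    obtain q s where qs: "q \<in> S k" "s \<in> \<delta> q (\<alpha> k)" "delayed_sim \<delta> F (\<pi> 0) s"
      using covered[OF Suc.prems(2)] by blast
    obtain \<pi>' where \<pi>': "is_run \<delta> s (\<lambda>j. \<alpha> (Suc k + j)) \<pi>'" "\<exists>\<^sub>\<infinity>j. \<pi>' j \<in> F"
      using delayed_sim_INFM_run[OF qs(3) Suc.prems(1)[unfolded steps_iff_is_run] inf_F] by blast
    have "steps k (case_nat q \<pi>')" using \<pi>'(1) qs(2)
      by (auto simp: steps_def is_run_def split: nat.split)
    moreover have "\<exists>\<^sub>\<infinity>j. case_nat q \<pi>' j \<in> F"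
      using \<pi>'(2) INFM_nat_shift[of "\<lambda>j. case_nat q \<pi>' j \<in> F" 1] by simp
    ultimately show False using Suc.IH qs(1) by simp
  qed
qed

end

definition sim_monotone :: "('q, 'a) trans \<Rightarrow> 'q set \<Rightarrow> 'q set \<Rightarrow> ('q \<Rightarrow> nat) \<Rightarrow> bool" where
  "sim_monotone \<delta> F S f \<longleftrightarrow> (\<forall>p\<in>S. \<forall>q\<in>S. delayed_sim \<delta> F p q \<longrightarrow> f p \<le> f q)"

locale complement_witness = saturated_dag \<delta> F \<alpha> S for \<delta> :: "('q::finite, 'a) trans" and F \<alpha> S +
  fixes g :: "'q set \<Rightarrow> 'q set" and X :: "'q macro set" and r L :: nat
  assumes S_Suc: "\<And>k. S (Suc k) = g (dset \<delta> (S k) (\<alpha> k))"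
    and sim_monotone_in_X:
      "\<And>S B f i. (S, B, f, i) \<in> Q2 F \<Longrightarrow> sim_monotone \<delta> F S f \<Longrightarrow> (S, B, f, i) \<in> X"
    and odd_r: "odd r" and L_pos: "0 < L"
    and tight_from_L: "\<And>k. L \<le> k \<Longrightarrow> max_rank k = r \<and> (\<forall>j. odd j \<and> j \<le> r \<longrightarrow> (\<exists>q\<in>S k. node_rank q k = j))"
begin

definition ranking :: "nat \<Rightarrow> 'q \<Rightarrow> nat" where
  "ranking k q = (if q \<in> S k then node_rank q k else 0)"

lemma ranking_le_r:
  assumes "L \<le> k"
  shows "ranking k q \<le> r"
  using node_rank_le_max_rank[of q k] tight_from_L[OF assms] by (simp add: ranking_def)

lemma rank_ranking: "L \<le> k \<Longrightarrow> rank (ranking k) = r"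
proof -
  assume k: "L \<le> k"
  then obtain q where "q \<in> S k" "node_rank q k = r" using tight_from_L odd_r by blast
  then have "r \<in> range (ranking k)" by (metis ranking_def rangeI)
  then show ?thesis unfolding rank_def using ranking_le_r[OF k] by (intro Max_eqI) auto
qed

lemma tight_ranking: "L \<le> k \<Longrightarrow> tight F (S k) (ranking k)"
  using rank_ranking[of k] tight_from_L[of k] odd_r node_rank_le node_rank_F_even
  unfolding tight_def is_ranking_def ranking_def by (auto simp: image_iff)

lemma ranking_Suc_le: "q \<in> S k \<Longrightarrow> q' \<in> \<delta> q (\<alpha> k) \<Longrightarrow> ranking (Suc k) q' \<le> ranking k q"
  using node_rank_Suc_le S_closed by (simp add: ranking_def)

lemma sim_monotone_ranking: "sim_monotone \<delta> F (S k) (ranking k)"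
  using node_rank_delayed_sim by (simp add: sim_monotone_def ranking_def)

text \<open>\<open>breakpoints m\<close> is the breakpoint set and index of the witness run at level \<open>L + m\<close>.\<close>

fun breakpoints :: "nat \<Rightarrow> 'q set \<times> nat" where
  "breakpoints 0 = ({}, 0)"
| "breakpoints (Suc m) = (case breakpoints m of (B, i) \<Rightarrow>
     if B = {} then (S (L + Suc m) \<inter> ranking (L + Suc m) -` {(i + 2) mod (r + 1)}, (i + 2) mod (r + 1))
     else (dset \<delta> B (\<alpha> (L + m)) \<inter> ranking (L + Suc m) -` {i}, i))"

definition bp_set :: "nat \<Rightarrow> 'q set" where "bp_set k = fst (breakpoints (k - L))"
definition bp_index :: "nat \<Rightarrow> nat" where "bp_index k = snd (breakpoints (k - L))"

lemma bp_step:
  assumes "L \<le> k"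
  shows "(bp_set k = {} \<and> bp_index (Suc k) = (bp_index k + 2) mod (r + 1)
            \<and> bp_set (Suc k) = S (Suc k) \<inter> ranking (Suc k) -` {bp_index (Suc k)})
         \<or> (bp_set k \<noteq> {} \<and> bp_index (Suc k) = bp_index k
            \<and> bp_set (Suc k) = dset \<delta> (bp_set k) (\<alpha> k) \<inter> ranking (Suc k) -` {bp_index k})"
proof -
  obtain m where m: "k = L + m" using assms le_Suc_ex by blast
  then have "Suc k - L = Suc m" "k - L = m" by simp_all
  then show ?thesis unfolding bp_set_def bp_index_def using m
    by (cases "breakpoints m") (simp add: Let_def)
qed

lemma bp_invariant:
  assumes "L \<le> k"
  shows "bp_set k \<subseteq> S k \<inter> ranking k -` {bp_index k} \<and> even (bp_index k) \<and> bp_index k < r"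
  using assms
proof (induction k rule: dec_induct)
  case base
  then show ?case using odd_r by (simp add: bp_set_def bp_index_def odd_pos)
next
  case (step k)
  show ?case
  proof (cases "bp_set k = {}")
    case True
    then have i: "bp_index (Suc k) = (bp_index k + 2) mod (r + 1)"
      and B: "bp_set (Suc k) = S (Suc k) \<inter> ranking (Suc k) -` {bp_index (Suc k)}"
      using bp_step[OF step(1)] by auto
    have "even (bp_index k + 2)" "even (r + 1)" using step odd_r by auto
    then have "even (bp_index (Suc k))" unfolding i by (rule dvd_mod)
    moreover have "bp_index (Suc k) \<le> r" unfolding i by (simp add: less_Suc_eq_le[symmetric])
    ultimately show ?thesis using B odd_r by (auto simp: order.order_iff_strict)
  next
    case False
    then have "bp_index (Suc k) = bp_index k"
      "bp_set (Suc k) = dset \<delta> (bp_set k) (\<alpha> k) \<inter> ranking (Suc k) -` {bp_index k}"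
      using bp_step[OF step(1)] by auto
    moreover have "dset \<delta> (bp_set k) (\<alpha> k) \<subseteq> S (Suc k)" using step S_closed by (auto simp: dset_def)
    ultimately show ?thesis using step by auto
  qed
qed

lemma r_le: "r \<le> 2 * card (UNIV :: 'q set)"
proof -
  obtain q where "q \<in> S L" "node_rank q L = max_rank L" using max_rank_attained[OF S_nonempty] by blast
  moreover have "max_rank L = r" using tight_from_L by blast
  ultimately show ?thesis using node_rank_le[of q L] by simp
qed

definition macro :: "nat \<Rightarrow> 'q macro" where
  "macro k = (S k, bp_set k, ranking k, bp_index k)"

lemma macro_in_X:
  assumes "L \<le> k"
  shows "macro k \<in> X"
proof -
  have inv: "bp_set k \<subseteq> S k \<inter> ranking k -` {bp_index k}" "even (bp_index k)" "bp_index k < r"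
    using bp_invariant[OF assms] by auto
  have "\<And>b N. even (b::nat) \<Longrightarrow> b < r \<Longrightarrow> r \<le> 2 * N \<Longrightarrow> b \<le> 2 * N - 2" by presburger
  then have "bp_index k \<le> 2 * card (UNIV :: 'q set) - 2" using inv(2,3) r_le by blast
  moreover have "tight F UNIV (ranking k)" using tight_ranking[OF assms] by (auto simp: tight_def)
  ultimately have "macro k \<in> Q2 F" using inv tight_ranking[OF assms] by (simp add: macro_def Q2_def)
  then show ?thesis using sim_monotone_in_X sim_monotone_ranking by (simp add: macro_def)
qed

lemma macro_step: "L \<le> k \<Longrightarrow> step3_ok \<delta> (macro k) (\<alpha> k) (macro (Suc k))"
  unfolding macro_def step3_ok_iff
  using bp_step[of k] ranking_Suc_le rank_ranking[of k] rank_ranking[of "Suc k"] by auto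

definition witness :: "nat \<Rightarrow> 'q bstate" where
  "witness k = (if k < L then Inl (S k) else Inr (macro k))"

lemma witness_run: "is_run (gen_delta \<delta> g X) (Inl (S 0)) \<alpha> witness"
  unfolding is_run_def
proof (intro conjI allI)
  show "witness 0 = Inl (S 0)" using L_pos by (simp add: witness_def)
  fix k
  consider "Suc k < L" | "Suc k = L" | "L \<le> k" by linarith
  then show "witness (Suc k) \<in> gen_delta \<delta> g X (witness k) (\<alpha> k)"
  proof cases
    case 1
    then show ?thesis by (simp add: witness_def gen_delta_def S_Suc)
  next
    case 2
    have "bp_set L = {}" "bp_index L = 0" by (simp_all add: bp_set_def bp_index_def)
    then have "(S (Suc k), {}, ranking (Suc k), 0) \<in> X" using macro_in_X[of L] 2 by (simp add: macro_def)
    then show ?thesis using 2 \<open>bp_set L = {}\<close> \<open>bp_index L = 0\<close>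
      by (auto simp: witness_def gen_delta_def macro_def S_Suc)
  next
    case 3
    then show ?thesis using macro_in_X[of k] macro_in_X[of "Suc k"] macro_step[of k]
      by (simp add: witness_def Inr_in_gen_delta_Inr macro_def S_Suc)
  qed
qed

lemma bp_set_node_rank:
  assumes "L \<le> k" "q \<in> bp_set k"
  shows "q \<in> S k \<and> node_rank q k = bp_index k"
proof -
  have "q \<in> S k" "ranking k q = bp_index k" using bp_invariant[OF assms(1)] assms(2) by auto
  then show ?thesis by (simp add: ranking_def)
qed

lemma bp_resets: "\<exists>\<^sub>\<infinity>k. bp_set k = {}"
proof (rule ccontr)
  assume "\<not> (\<exists>\<^sub>\<infinity>k. bp_set k = {})"
  then obtain k1 where k1: "\<forall>k\<ge>k1. bp_set k \<noteq> {}" by (auto simp: MOST_nat_le)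
  define k0 where "k0 = max k1 L"
  have k0: "L \<le> k0" "\<And>k. k0 \<le> k \<Longrightarrow> bp_set k \<noteq> {}" using k1 by (auto simp: k0_def)
  have keep: "bp_index (Suc k) = bp_index k
      \<and> bp_set (Suc k) = dset \<delta> (bp_set k) (\<alpha> k) \<inter> ranking (Suc k) -` {bp_index k}" if "k0 \<le> k" for k
    using bp_step[of k] k0(1) k0(2)[OF that] that by auto
  have index: "bp_index k = bp_index k0" if "k0 \<le> k" for k
    using that
  proof (induction k rule: dec_induct)
    case (step k)
    then show ?case using keep[OF step(1)] by simp
  qed simp
  show False
  proof (rule no_even_rank_chain[of "bp_index k0" k0 bp_set])
    show "even (bp_index k0)" using bp_invariant[OF k0(1)] by simp
  next
    fix k assume k: "k0 \<le> k"
    have "L \<le> k" using k k0(1) by simp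
    then have "bp_set k \<subseteq> S k" "\<forall>q\<in>bp_set k. node_rank q k = bp_index k0"
      using bp_set_node_rank index[OF k] by auto
    then show "bp_set k \<noteq> {} \<and> bp_set k \<subseteq> S k \<and> (\<forall>q\<in>bp_set k. node_rank q k = bp_index k0)"
      using k0(2)[OF k] by simp
    fix q' assume "q' \<in> bp_set (Suc k)"
    then have "q' \<in> dset \<delta> (bp_set k) (\<alpha> k)" using keep[OF k] by blast
    then show "\<exists>q\<in>bp_set k. q' \<in> \<delta> q (\<alpha> k)" by (simp add: dset_def)
  qed
qed

lemma witness_accepting: "accepting (sat_final X) witness"
proof (rule accepting_if_finite_range)
  let ?B = "Inl ` UNIV \<union> Inr ` (UNIV \<times> UNIV \<times> {f. \<forall>q. f q \<le> r} \<times> {..r}) :: 'q bstate set"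
  have "witness k \<in> ?B" for k
  proof (cases "k < L")
    case False
    then have "ranking k \<in> {f. \<forall>q. f q \<le> r}" "bp_index k \<in> {..r}"
      using ranking_le_r bp_invariant[of k] by auto
    then show ?thesis using False by (simp add: witness_def macro_def)
  qed (simp add: witness_def)
  then have "range witness \<subseteq> ?B" by blast
  moreover have "finite ?B"
    by (intro finite_UnI finite_imageI finite_cartesian_product finite_bounded_funs) simp_all
  ultimately show "finite (range witness)" by (rule finite_subset)
next
  have "\<exists>\<^sub>\<infinity>k. bp_set k = {} \<and> L \<le> k" using INFM_conjI[OF bp_resets MOST_ge_nat] .
  then show "\<exists>\<^sub>\<infinity>k. witness k \<in> sat_final X"
  proof (rule INFM_mono)
    fix k assume k: "bp_set k = {} \<and> L \<le> k"
    then have "(S k, {}, ranking k, bp_index k) \<in> X" using macro_in_X[of k] by (simp add: macro_def)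
    then show "witness k \<in> sat_final X" using k by (simp add: witness_def macro_def sat_final_def)
  qed
qed

end

definition levels :: "('q, 'a) trans \<Rightarrow> ('q set \<Rightarrow> 'q set) \<Rightarrow> 'q set \<Rightarrow> (nat \<Rightarrow> 'a) \<Rightarrow> nat \<Rightarrow> 'q set" where
  "levels \<delta> g I \<alpha> k = rec_nat I (\<lambda>k S. g (dset \<delta> S (\<alpha> k))) k"

lemma levels_0 [simp]: "levels \<delta> g I \<alpha> 0 = I"
  by (simp add: levels_def)

lemma levels_Suc [simp]: "levels \<delta> g I \<alpha> (Suc k) = g (dset \<delta> (levels \<delta> g I \<alpha> k) (\<alpha> k))"
  by (simp add: levels_def)

lemma gen_lang_if_empty_level:
  fixes \<delta> :: "('q::finite, 'a) trans"
  assumes "g {} = {}" and "levels \<delta> g I \<alpha> k0 = {}"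
  shows "\<alpha> \<in> lang (gen_delta \<delta> g X) {Inl I} (sat_final X)"
proof -
  let ?\<rho>B = "\<lambda>k. Inl (levels \<delta> g I \<alpha> k) :: 'q bstate"
  have "levels \<delta> g I \<alpha> k = {}" if "k0 \<le> k" for k
    using that by (induction k rule: dec_induct) (use assms in \<open>simp_all add: dset_def\<close>)
  then have "\<forall>\<^sub>\<infinity>k. ?\<rho>B k = Inl {}" unfolding MOST_nat_le by auto
  then have "\<exists>\<^sub>\<infinity>k. ?\<rho>B k = Inl {}" by (simp add: MOST_INFM)
  then have "accepting (sat_final X) ?\<rho>B" by (auto simp: accepting_def sat_final_def)
  moreover have "is_run (gen_delta \<delta> g X) (Inl I) \<alpha> ?\<rho>B" by (simp add: is_run_def gen_delta_def)
  ultimately show ?thesis by (auto simp: lang_def)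
qed

lemma levels_covered:
  assumes covered: "\<And>S p. p \<in> g S \<Longrightarrow> \<exists>s\<in>S. delayed_sim \<delta> F p s"
    and p: "p \<in> levels \<delta> g I \<alpha> (Suc k)"
  shows "\<exists>q\<in>levels \<delta> g I \<alpha> k. \<exists>s\<in>\<delta> q (\<alpha> k). delayed_sim \<delta> F p s"
proof -
  obtain s where "s \<in> dset \<delta> (levels \<delta> g I \<alpha> k) (\<alpha> k)" "delayed_sim \<delta> F p s"
    using covered[of p] p by auto
  then show ?thesis by (auto simp: dset_def)
qed

lemma rejecting_dag_levels:
  fixes \<delta> :: "('q::finite, 'a) trans"
  assumes total: "complete \<delta>" and ext: "\<And>S. S \<subseteq> g S"
    and covered: "\<And>S p. p \<in> g S \<Longrightarrow> \<exists>s\<in>S. delayed_sim \<delta> F p s"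
    and rejected: "\<alpha> \<notin> lang \<delta> I F"
  shows "rejecting_dag \<delta> F \<alpha> (levels \<delta> g I \<alpha>)"
proof -
  let ?S = "levels \<delta> g I \<alpha>"
  have closed: "q' \<in> ?S (Suc k)" if "q \<in> ?S k" "q' \<in> \<delta> q (\<alpha> k)" for k q q'
    using ext[of "dset \<delta> (?S k) (\<alpha> k)"] dset_mem[of q "?S k" q' \<delta> "\<alpha> k"] that by auto
  with total interpret run_dag \<delta> F \<alpha> ?S by unfold_locales
  have "\<not> (\<exists>\<^sub>\<infinity>j. \<pi> j \<in> F)" if "steps 0 \<pi>" "\<pi> 0 \<in> ?S 0" for \<pi>
  proof
    assume "\<exists>\<^sub>\<infinity>j. \<pi> j \<in> F"
    then have "accepting F \<pi>" by (intro accepting_if_finite_range) simp_all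
    then show False using rejected that by (auto simp: lang_def steps_iff_is_run)
  qed
  then have "\<not> (\<exists>\<^sub>\<infinity>j. \<pi> j \<in> F)" if "steps k \<pi>" "\<pi> 0 \<in> ?S k" for k \<pi>
    using rejecting_if_rejecting_at_0[OF _ levels_covered[OF covered]] that by blast
  with total closed show ?thesis by unfold_locales
qed

lemma gen_lang_supset_complement:
  fixes \<delta> :: "('q::finite, 'a) trans"
  assumes total: "complete \<delta>" and ext: "\<And>S. S \<subseteq> g S"
    and covered: "\<And>S p. p \<in> g S \<Longrightarrow> \<exists>s\<in>S. delayed_sim \<delta> F p s"
    and sim_monotone_in_X:
      "\<And>S B f i. (S, B, f, i) \<in> Q2 F \<Longrightarrow> sim_monotone \<delta> F S f \<Longrightarrow> (S, B, f, i) \<in> X"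
  shows "- lang \<delta> I F \<subseteq> lang (gen_delta \<delta> g X) {Inl I} (sat_final X)"
proof
  fix \<alpha> assume "\<alpha> \<in> - lang \<delta> I F"
  then interpret rejecting_dag \<delta> F \<alpha> "levels \<delta> g I \<alpha>"
    using rejecting_dag_levels[OF total ext covered] by simp
  show "\<alpha> \<in> lang (gen_delta \<delta> g X) {Inl I} (sat_final X)"
  proof (cases "\<exists>k. levels \<delta> g I \<alpha> k = {}")
    case True
    moreover have "g {} = {}" using covered by blast
    ultimately show ?thesis using gen_lang_if_empty_level by blast
  next
    case False
    interpret saturated_dag \<delta> F \<alpha> "levels \<delta> g I \<alpha>"
      using levels_covered[OF covered] False by unfold_locales auto
    obtain r l where "odd r" and "\<And>k. l \<le> k \<Longrightarrow> max_rank k = r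
        \<and> (\<forall>j. odd j \<and> j \<le> r \<longrightarrow> (\<exists>q\<in>levels \<delta> g I \<alpha> k. node_rank q k = j))"
      using eventually_tight by (auto simp: MOST_nat_le)
    then interpret complement_witness \<delta> F \<alpha> "levels \<delta> g I \<alpha>" g X r "Suc l"
      using sim_monotone_in_X by unfold_locales auto
    show ?thesis using witness_run witness_accepting by (auto simp: lang_def)
  qed
qed

lemma gen_lang_eq_complement:
  fixes \<delta> :: "('q::finite, 'a) trans"
  assumes "complete \<delta>" "\<And>S. S \<subseteq> g S" "\<And>S p. p \<in> g S \<Longrightarrow> \<exists>s\<in>S. delayed_sim \<delta> F p s"
    and "X \<subseteq> Q2 F" "\<And>S B f i. (S, B, f, i) \<in> Q2 F \<Longrightarrow> sim_monotone \<delta> F S f \<Longrightarrow> (S, B, f, i) \<in> X"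
  shows "lang (gen_delta \<delta> g X) {Inl I} (sat_final X) = - lang \<delta> I F"
  using gen_lang_subset_complement[OF assms(2,4)] gen_lang_supset_complement[OF assms(1,2,3,5)]
  by (rule equalityI)

lemma sat_lang_eq_complement:
  fixes \<delta> :: "('q::finite, 'a) trans"
  assumes "complete \<delta>" "X \<subseteq> Q2 F"
    and "\<And>S B f i. (S, B, f, i) \<in> Q2 F \<Longrightarrow> sim_monotone \<delta> F S f \<Longrightarrow> (S, B, f, i) \<in> X"
  shows "lang (sat_delta \<delta> F X) {Inl I} (sat_final X) = - lang \<delta> I F"
proof -
  have "S \<subseteq> str \<delta> F S" for S using delayed_sim_refl[OF assms(1)] by (auto simp: str_def)
  moreover have "\<exists>s\<in>S. delayed_sim \<delta> F p s" if "p \<in> str \<delta> F S" for S p using that by (simp add: str_def)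
  ultimately show ?thesis
    unfolding sat_delta_eq_gen_delta by (rule gen_lang_eq_complement[OF assms(1) _ _ assms(2,3)])
qed

lemma schewe_lang_eq_complement:
  fixes \<delta> :: "('q::finite, 'a) trans"
  assumes "complete \<delta>"
  shows "lang (schewe_delta \<delta> F) {Inl I} (schewe_final F) = - lang \<delta> I F"
proof -
  have covered: "\<exists>s\<in>S. delayed_sim \<delta> F p s" if "p \<in> id S" for S p
    using that delayed_sim_refl[OF assms] by auto
  show ?thesis
    unfolding schewe_delta_eq_gen_delta schewe_final_eq_sat_final
    by (rule gen_lang_eq_complement[OF assms _ covered]) simp_all
qed

lemma Q2_di_subset: "Q2_di \<delta> F \<subseteq> Q2 F"
  unfolding Q2_di_def by blast

lemma Q2_de_subset: "Q2_de \<delta> F \<subseteq> Q2 F"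
  unfolding Q2_de_def by blast

lemma sim_monotone_in_Q2_di:
  assumes "(S, B, f, i) \<in> Q2 F" "sim_monotone \<delta> F S f"
  shows "(S, B, f, i) \<in> Q2_di \<delta> F"
proof -
  have "\<not> (\<exists>p\<in>S. \<exists>q\<in>S. direct_sim \<delta> F p q \<and> f p > f q)"
    using assms(2) unfolding sim_monotone_def by (meson direct_sim_imp_delayed_sim not_le)
  then show ?thesis using assms(1) by (simp add: Q2_di_def)
qed

lemma sim_monotone_in_Q2_de:
  assumes "(S, B, f, i) \<in> Q2 F" "sim_monotone \<delta> F S f"
  shows "(S, B, f, i) \<in> Q2_de \<delta> F"
proof -
  have "x \<le> ceil_even x" for x by (simp add: ceil_even_def)
  then have "\<not> (\<exists>p\<in>S. \<exists>q\<in>S. delayed_sim \<delta> F p q \<and> f p > ceil_even (f q))"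
    using assms(2) unfolding sim_monotone_def by (meson le_trans not_le)
  then show ?thesis using assms(1) by (simp add: Q2_de_def)
qed

lemma sim_monotone_in_Q2_dide:
  assumes "(S, B, f, i) \<in> Q2 F" "sim_monotone \<delta> F S f"
  shows "(S, B, f, i) \<in> Q2_dide \<delta> F"
  using sim_monotone_in_Q2_di[OF assms] sim_monotone_in_Q2_de[OF assms] by (simp add: Q2_dide_def)

theorem lemma9:
  fixes \<delta> :: "('q::finite, 'a::finite) trans" and I F :: "'q set"
  assumes "complete \<delta>"
  shows "lang (sat_delta \<delta> F (Q2_di \<delta> F)) {Inl I} (sat_final (Q2_di \<delta> F))
           = lang (sat_delta \<delta> F (Q2_de \<delta> F)) {Inl I} (sat_final (Q2_de \<delta> F))
       \<and> lang (sat_delta \<delta> F (Q2_de \<delta> F)) {Inl I} (sat_final (Q2_de \<delta> F))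
           = lang (sat_delta \<delta> F (Q2_dide \<delta> F)) {Inl I} (sat_final (Q2_dide \<delta> F))
       \<and> lang (sat_delta \<delta> F (Q2_dide \<delta> F)) {Inl I} (sat_final (Q2_dide \<delta> F))
           = lang (schewe_delta \<delta> F) {Inl I} (schewe_final F)"
proof -
  have "lang (sat_delta \<delta> F (Q2_di \<delta> F)) {Inl I} (sat_final (Q2_di \<delta> F)) = - lang \<delta> I F"
    using sim_monotone_in_Q2_di by (rule sat_lang_eq_complement[OF assms Q2_di_subset])
  moreover have "lang (sat_delta \<delta> F (Q2_de \<delta> F)) {Inl I} (sat_final (Q2_de \<delta> F)) = - lang \<delta> I F"
    using sim_monotone_in_Q2_de by (rule sat_lang_eq_complement[OF assms Q2_de_subset])
  moreover have "Q2_dide \<delta> F \<subseteq> Q2 F" using Q2_di_subset by (auto simp: Q2_dide_def)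
  then have "lang (sat_delta \<delta> F (Q2_dide \<delta> F)) {Inl I} (sat_final (Q2_dide \<delta> F)) = - lang \<delta> I F"
    using sim_monotone_in_Q2_dide by (rule sat_lang_eq_complement[OF assms])
  ultimately show ?thesis using schewe_lang_eq_complement[OF assms] by simp
qed

end
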